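(* Let the setting be as in the context, with $\mathsf Z\subset\mathbb R^m$ Borel. Suppose Assumption (A) holds with data $(g,n,\bar m,d)$, let $m',d'>0$ satisfy $\bar m+2m'>1$, $\beta(\bar m+2m')<1$, $d'\ge d/(\bar m+2m'-1)$, let $\ell$ be the associated weight function, and set $k_1:=r$, $k_2:=\ell$. Suppose, for each $i=1,\dots,m$: (a) $P$ has a density representation $f$, $D_i^2f(z'|z)$ exists for all $(z,z')\in\operatorname{int}(\mathsf Z)\times\mathsf Z$, and $(z,z')\mapsto D_if(z'|z)$ is continuous; (b) for every $z'$ and $z^{-i}$, the equation $D_i^2f(z'|z)=0$ has finitely many solutions in $z^i$ (denote them $z_i^*(z',z^{-i})$), and for every $z_0\in\operatorname{int}(\mathsf Z)$ there exist $\delta>0$ and a compact $A\subset\mathsf Z$ such that $z'\notin A$ implies that no solution $z_i^*(z',z_0^{-i})$ lies in $B_\delta(z_0^i)$; (c) $D_ic(z)$ exists on $\operatorname{int}(\mathsf Z)$ and $z\mapsto D_ic(z)$ is continuous on $\operatorname{int}(\mathsf Z)$; (d) for $j=1,2$, $k_j$ is continuous and $z\mapsto\int|k_j(z')D_if(z'|z)|dz'$ is finite and continuous on $\operatorname{int}(\mathsf Z)$. Then for $i=1,\dots,m$, $D_i\psi^*$ exists and $z\mapsto D_i\psi^*(z)$ is continuous on $\operatorname{int}(\mathsf Z)$.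
   Context: $P$ is a stochastic kernel on $(\mathsf Z,\mathscr Z)$, $P^0(z,\cdot)=\delta_z$, $P^n(z,B)=\int P(z',B)P^{n-1}(z,dz')$; $(Z_t)$ is a time-homogeneous Markov process with kernel $P$ adapted to a filtration; $\mathbb E_z h(Z_t)=\int h\,dP^t(z,\cdot)$. $\mathscr M$ is the set of a.s. finite $\mathbb N_0$-valued stopping times. $\beta\in(0,1)$; $r,c:\mathsf Z\to\mathbb R$ measurable. $v^*(z)=\sup_{\tau\in\mathscr M}\mathbb E_z\{\sum_{t=0}^{\tau-1}\beta^tc(Z_t)+\beta^\tau r(Z_\tau)\}$, $\psi^*(z)=c(z)+\beta\int v^*(z')P(z,dz')$. Assumption (A): there exist measurable $g:\mathsf Z\to\mathbb R_+$, $n\in\mathbb N_0$, $\bar m,d\ge0$ with $\beta\bar m<1$ such that $\max\{\int|r|dP^n(z,\cdot),\int|c|dP^n(z,\cdot)\}\le g(z)$ and $\int g(z')P(z,dz')\le\bar mg(z)+d$ for all $z$. $\ell(z)=m'\big(\sum_{t=1}^{n-1}\mathbb E_z|r(Z_t)|+\sum_{t=0}^{n-1}\mathbb E_z|c(Z_t)|\big)+g(z)+d'$. Notation: $z=(z^1,\dots,z^m)$, $z^{-i}$ the other coordinates; $D_i$, $D_i^2$ are first and second partial derivatives w.r.t. $z^i$ (for $f(z'|z)$, w.r.t. the conditioning variable); $B_\delta(z_0^i)=\{z^i:|z^i-z_0^i|<\delta\}$; a density representation means $P(z,B)=\int_Bf(z'|z)dz'$. *)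

theory Defs
  imports "HOL-Probability.Probability"
begin

definition upd :: "real ^ 'm \<Rightarrow> 'm \<Rightarrow> real \<Rightarrow> real ^ 'm" where
  "upd z i t = (\<chi> j. if j = i then t else z $ j)"

definition Dp_ex :: "'m \<Rightarrow> (real ^ 'm \<Rightarrow> real) \<Rightarrow> real ^ 'm \<Rightarrow> bool" where
  "Dp_ex i h z \<longleftrightarrow> (\<lambda>t. h (upd z i t)) differentiable (at (z $ i))"

definition Dp :: "'m \<Rightarrow> (real ^ 'm \<Rightarrow> real) \<Rightarrow> real ^ 'm \<Rightarrow> real" where
  "Dp i h z = deriv (\<lambda>t. h (upd z i t)) (z $ i)"

definition Dp2_ex :: "'m \<Rightarrow> (real ^ 'm \<Rightarrow> real) \<Rightarrow> real ^ 'm \<Rightarrow> bool" where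
  "Dp2_ex i h z \<longleftrightarrow> (\<forall>\<^sub>F t in nhds (z $ i). Dp_ex i h (upd z i t)) \<and> Dp_ex i (Dp i h) z"

fun kpow :: "('a \<Rightarrow> 'a measure) \<Rightarrow> 'a measure \<Rightarrow> nat \<Rightarrow> 'a \<Rightarrow> 'a measure" where
  "kpow P S 0 z = return S z"
| "kpow P S (Suc n) z = bind (kpow P S n z) P"

definition vstar :: "('a \<Rightarrow> 'w measure) \<Rightarrow> (nat \<Rightarrow> 'w measure) \<Rightarrow> (nat \<Rightarrow> 'w \<Rightarrow> 'a)
    \<Rightarrow> real \<Rightarrow> ('a \<Rightarrow> real) \<Rightarrow> ('a \<Rightarrow> real) \<Rightarrow> 'a \<Rightarrow> real" where
  "vstar M F Z \<beta> r c z =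
     (SUP \<tau> \<in> {\<tau>. stopping_time F \<tau>}.
        integral\<^sup>L (M z) (\<lambda>\<omega>. (\<Sum>t<\<tau> \<omega>. \<beta> ^ t * c (Z t \<omega>)) + \<beta> ^ (\<tau> \<omega>) * r (Z (\<tau> \<omega>) \<omega>)))"

definition psistar :: "('a \<Rightarrow> 'a measure) \<Rightarrow> ('a \<Rightarrow> 'w measure) \<Rightarrow> (nat \<Rightarrow> 'w measure)
    \<Rightarrow> (nat \<Rightarrow> 'w \<Rightarrow> 'a) \<Rightarrow> real \<Rightarrow> ('a \<Rightarrow> real) \<Rightarrow> ('a \<Rightarrow> real) \<Rightarrow> 'a \<Rightarrow> real" where
  "psistar P M F Z \<beta> r c z = c z + \<beta> * integral\<^sup>L (P z) (vstar M F Z \<beta> r c)"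

text \<open>Weight function ell (valued in [0,infinity]), with E_z h(Z_t) = integral of h w.r.t. P^t(z,.).\<close>
definition ell :: "('a \<Rightarrow> 'a measure) \<Rightarrow> 'a measure \<Rightarrow> nat \<Rightarrow> real \<Rightarrow> real \<Rightarrow> ('a \<Rightarrow> real)
    \<Rightarrow> ('a \<Rightarrow> real) \<Rightarrow> ('a \<Rightarrow> real) \<Rightarrow> 'a \<Rightarrow> ennreal" where
  "ell P S n m' d' g r c z =
     ennreal m' * ((\<Sum>t\<in>{1..<n}. \<integral>\<^sup>+ z'. ennreal \<bar>r z'\<bar> \<partial>(kpow P S t z))
                  + (\<Sum>t<n. \<integral>\<^sup>+ z'. ennreal \<bar>c z'\<bar> \<partial>(kpow P S t z)))
     + ennreal (g z) + ennreal d'"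

end

theory Submission
  imports Defs
begin

text \<open>
  Assumption (A) together with the choice of \<open>m'\<close> and \<open>d'\<close> makes \<open>g + d'\<close> a Lyapunov function for
  \<open>P\<close> with rate \<open>\<rho> = mbar + 2 m'\<close>, and \<open>\<beta> \<rho> < 1\<close>; summing the resulting geometric bounds over
  time gives \<open>|v*| \<le> |r| + K \<ell>\<close>. Hence \<open>\<psi>* z = c z + \<beta> \<integral> v*(z') f(z'|z) dz'\<close> with an integrand
  dominated by \<open>(|r| + K \<ell>)(z') |f(z'|z)|\<close>. To differentiate under the integral sign in \<open>z\<^sup>i\<close>
  near \<open>z\<^sub>0\<close>, note that by (b) the map \<open>t \<mapsto> D\<^sub>i f(z'|z\<^sub>0 with z\<^sup>i = t)\<close> has no critical point
  on a small segment around \<open>z\<^sub>0\<^sup>i\<close> when \<open>z'\<close> lies outside a compact set, so there it is bounded by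
  its values at the two ends of the segment; on the compact set it is bounded by continuity. This
  gives an integrable dominator of the difference quotients. Continuity of the derivative
  follows from the generalised dominated convergence theorem (Pratt's lemma), the dominators
  having continuous integrals by (d).
\<close>

section \<open>Iterated kernels\<close>

lemma kpow_measurable:
  assumes "P \<in> S \<rightarrow>\<^sub>M prob_algebra S"
  shows "kpow P S t \<in> S \<rightarrow>\<^sub>M prob_algebra S"
proof (induction t)
  case 0
  have "kpow P S 0 = return S" by (rule ext) simp
  then show ?case by simp
next
  case (Suc t)
  have "kpow P S (Suc t) = (\<lambda>z. bind (kpow P S t z) P)" by (rule ext) simp
  then show ?case using measurable_bind_prob_space[OF Suc assms] by simp
qed

lemma kpow_in_prob_algebra:
  assumes "P \<in> S \<rightarrow>\<^sub>M prob_algebra S" "z \<in> space S"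
  shows "kpow P S t z \<in> space (prob_algebra S)"
  using measurable_space[OF kpow_measurable[OF assms(1)] assms(2)] .

lemma sets_kpow:
  assumes "P \<in> S \<rightarrow>\<^sub>M prob_algebra S" "z \<in> space S"
  shows "sets (kpow P S t z) = sets S"
  using kpow_in_prob_algebra[OF assms] by (simp add: space_prob_algebra)

lemma space_kpow:
  assumes "P \<in> S \<rightarrow>\<^sub>M prob_algebra S" "z \<in> space S"
  shows "space (kpow P S t z) = space S"
  using sets_kpow[OF assms] by (rule sets_eq_imp_space_eq)

lemma prob_space_kpow:
  assumes "P \<in> S \<rightarrow>\<^sub>M prob_algebra S" "z \<in> space S"
  shows "prob_space (kpow P S t z)"
  using kpow_in_prob_algebra[OF assms] by (simp add: space_prob_algebra)

lemma kpow_measurable_on_kpow: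
  assumes "P \<in> S \<rightarrow>\<^sub>M prob_algebra S" "z \<in> space S"
  shows "kpow P S t \<in> kpow P S k z \<rightarrow>\<^sub>M subprob_algebra S"
  using measurable_prob_algebraD[OF kpow_measurable[OF assms(1)]] sets_kpow[OF assms]
  by (simp cong: measurable_cong_sets)

lemma kpow_add:
  assumes P: "P \<in> S \<rightarrow>\<^sub>M prob_algebra S" and z: "z \<in> space S"
  shows "bind (kpow P S a z) (kpow P S b) = kpow P S (a + b) z"
proof (induction b)
  case 0
  have "kpow P S 0 = return S" by (rule ext) simp
  then show ?case using sets_kpow[OF P z] by (simp add: bind_return'')
next
  case (Suc b)
  have "kpow P S (a + Suc b) z = bind (bind (kpow P S a z) (kpow P S b)) P"
    using Suc by simp
  also have "\<dots> = bind (kpow P S a z) (\<lambda>x. bind (kpow P S b x) P)"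
    by (rule bind_assoc[OF kpow_measurable_on_kpow[OF P z] measurable_prob_algebraD[OF P]])
  finally show ?case by (simp add: fun_eq_iff)
qed

lemma kpow_one:
  assumes "P \<in> S \<rightarrow>\<^sub>M prob_algebra S" "z \<in> space S"
  shows "kpow P S 1 z = P z"
  using bind_return[OF measurable_prob_algebraD[OF assms(1)] assms(2)] by simp

lemma kpow_Suc_left:
  assumes "P \<in> S \<rightarrow>\<^sub>M prob_algebra S" "z \<in> space S"
  shows "bind (P z) (kpow P S t) = kpow P S (Suc t) z"
  using kpow_add[OF assms, of 1 t] kpow_one[OF assms] by simp

lemma nn_integral_kpow_Suc:
  fixes h :: "'a \<Rightarrow> ennreal"
  assumes P: "P \<in> S \<rightarrow>\<^sub>M prob_algebra S" and z: "z \<in> space S" and h: "h \<in> borel_measurable S"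
  shows "(\<integral>\<^sup>+x. (\<integral>\<^sup>+y. h y \<partial>kpow P S t x) \<partial>P z) = (\<integral>\<^sup>+x. h x \<partial>kpow P S (Suc t) z)"
proof -
  have "kpow P S t \<in> P z \<rightarrow>\<^sub>M subprob_algebra S"
    using measurable_prob_algebraD[OF kpow_measurable[OF P]] measurable_space[OF P z]
    by (simp add: space_prob_algebra cong: measurable_cong_sets)
  from nn_integral_bind[OF h this] kpow_Suc_left[OF P z, of t] show ?thesis
    by (simp del: kpow.simps)
qed

lemma measure_kpow_Suc:
  assumes P: "P \<in> S \<rightarrow>\<^sub>M prob_algebra S" and z: "z \<in> space S" and A: "A \<in> sets S"
  shows "measure (kpow P S (Suc t) z) A = (\<integral>x. measure (P x) A \<partial>kpow P S t z)"
proof -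
  interpret prob_space "kpow P S t z" by (rule prob_space_kpow[OF P z])
  have "P \<in> kpow P S t z \<rightarrow>\<^sub>M subprob_algebra S"
    using measurable_prob_algebraD[OF P] sets_kpow[OF P z] by (simp cong: measurable_cong_sets)
  then show ?thesis using measure_bind[OF _ A] by simp
qed

section \<open>The value function of the stopping problem\<close>

locale markov_process =
  fixes S :: "'a measure" and P :: "'a \<Rightarrow> 'a measure" and M :: "'a \<Rightarrow> 'w measure"
    and F :: "nat \<Rightarrow> 'w measure" and Z :: "nat \<Rightarrow> 'w \<Rightarrow> 'a"
  assumes kernel: "P \<in> S \<rightarrow>\<^sub>M prob_algebra S"
    and prob: "\<And>z. z \<in> space S \<Longrightarrow> prob_space (M z)"
    and filt: "\<And>z. z \<in> space S \<Longrightarrow> filtration (space (M z)) F \<and> (\<forall>t. subalgebra (M z) (F t))"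
    and adapted: "\<And>t. Z t \<in> F t \<rightarrow>\<^sub>M S"
    and init: "\<And>z. z \<in> space S \<Longrightarrow> AE \<omega> in M z. Z 0 \<omega> = z"
    and trans: "\<And>z t B. z \<in> space S \<Longrightarrow> B \<in> sets S \<Longrightarrow> AE \<omega> in M z.
           real_cond_exp (M z) (F t) (\<lambda>\<omega>. indicator B (Z (Suc t) \<omega>)) \<omega> = measure (P (Z t \<omega>)) B"
begin

lemma Z_measurable: "z \<in> space S \<Longrightarrow> Z t \<in> M z \<rightarrow>\<^sub>M S"
  using measurable_from_subalg[OF _ adapted] filt by blast

lemma measure_Z_Suc:
  assumes z: "z \<in> space S" and A: "A \<in> sets S"
  shows "measure (distr (M z) S (Z (Suc t))) A = (\<integral>\<omega>. measure (P (Z t \<omega>)) A \<partial>M z)"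
proof -
  interpret prob_space "M z" using prob[OF z] .
  have "sigma_finite_subalgebra (M z) (F t)"
    by (rule finite_measure_subalgebra_is_sigma_finite)
       (use filt[OF z] in \<open>simp add: finite_measure_subalgebra_def finite_measure_subalgebra_axioms_def
         finite_measure_axioms\<close>)
  note cond_exp = sigma_finite_subalgebra.real_cond_exp_int(2)[OF this]
  have mP: "(\<lambda>x. measure (P x) A) \<in> borel_measurable S"
    using measurable_measure_prob_algebra[OF A] kernel by measurable
  have ind: "(\<lambda>\<omega>. indicator A (Z (Suc t) \<omega>) :: real) = indicator (Z (Suc t) -` A)"
    by (auto simp: indicator_def)
  have int: "integrable (M z) (\<lambda>\<omega>. indicator A (Z (Suc t) \<omega>) :: real)"
    by (rule integrable_const_bound[where B=1])
       (use measurable_compose[OF Z_measurable[OF z] borel_measurable_indicator[OF A]] in auto)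
  have "measure (distr (M z) S (Z (Suc t))) A = (\<integral>\<omega>. indicator A (Z (Suc t) \<omega>) \<partial>M z)"
    using A Z_measurable[OF z] by (simp add: measure_distr ind Int_commute)
  also have "\<dots> = (\<integral>\<omega>. real_cond_exp (M z) (F t) (\<lambda>\<omega>. indicator A (Z (Suc t) \<omega>)) \<omega> \<partial>M z)"
    using cond_exp[OF int] by simp
  also have "\<dots> = (\<integral>\<omega>. measure (P (Z t \<omega>)) A \<partial>M z)"
    by (rule integral_cong_AE) (use trans[OF z A] measurable_compose[OF Z_measurable[OF z] mP] in auto)
  finally show ?thesis .
qed

lemma distr_Z_eq_kpow:
  assumes z: "z \<in> space S"
  shows "distr (M z) S (Z t) = kpow P S t z"
proof (induction t)
  case 0
  interpret prob_space "M z" using prob[OF z] .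
  show ?case
  proof (rule measure_eqI)
    fix B assume "B \<in> sets (distr (M z) S (Z 0))"
    then have B: "B \<in> sets S" by simp
    have "emeasure (distr (M z) S (Z 0)) B = emeasure (M z) (Z 0 -` B \<inter> space (M z))"
      using B Z_measurable[OF z] by (simp add: emeasure_distr)
    also have "\<dots> = emeasure (M z) (if z \<in> B then space (M z) else {})"
      by (rule emeasure_eq_AE) (use init[OF z] measurable_sets[OF Z_measurable[OF z] B] in auto)
    finally show "emeasure (distr (M z) S (Z 0)) B = emeasure (kpow P S 0 z) B"
      using B by (simp add: emeasure_space_1)
  qed simp
next
  case (Suc t)
  interpret prob_space "M z" using prob[OF z] .
  interpret D: prob_space "distr (M z) S (Z (Suc t))"
    by (rule prob_space_distr[OF Z_measurable[OF z]])
  interpret K: prob_space "kpow P S (Suc t) z" by (rule prob_space_kpow[OF kernel z])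
  show ?case
  proof (rule measure_eqI)
    show "sets (distr (M z) S (Z (Suc t))) = sets (kpow P S (Suc t) z)"
      using sets_kpow[OF kernel z, of "Suc t"] by (simp del: kpow.simps)
    fix A assume "A \<in> sets (distr (M z) S (Z (Suc t)))"
    then have A: "A \<in> sets S" by simp
    have mP: "(\<lambda>x. measure (P x) A) \<in> borel_measurable S"
      using measurable_measure_prob_algebra[OF A] kernel by measurable
    have "measure (distr (M z) S (Z (Suc t))) A = (\<integral>x. measure (P x) A \<partial>distr (M z) S (Z t))"
      using measure_Z_Suc[OF z A] integral_distr[OF Z_measurable[OF z] mP] by simp
    also have "\<dots> = measure (kpow P S (Suc t) z) A"
      using Suc measure_kpow_Suc[OF kernel z A] by simp
    finally show "emeasure (distr (M z) S (Z (Suc t))) A = emeasure (kpow P S (Suc t) z) A"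
      by (simp add: D.emeasure_eq_measure K.emeasure_eq_measure del: kpow.simps)
  qed
qed

lemma nn_integral_Z_eq_kpow:
  assumes "z \<in> space S" and "h \<in> borel_measurable S"
  shows "(\<integral>\<^sup>+\<omega>. h (Z t \<omega>) \<partial>M z) = (\<integral>\<^sup>+x. h x \<partial>kpow P S t z)"
proof -
  have "h \<in> borel_measurable (distr (M z) S (Z t))" using assms(2) by simp
  then show ?thesis
    using nn_integral_distr[OF Z_measurable[OF assms(1)], of h] distr_Z_eq_kpow[OF assms(1), of t] by metis
qed

end

definition payoff_bound ::
    "('a \<Rightarrow> 'a measure) \<Rightarrow> 'a measure \<Rightarrow> real \<Rightarrow> ('a \<Rightarrow> real) \<Rightarrow> ('a \<Rightarrow> real) \<Rightarrow> 'a \<Rightarrow> ennreal" where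
  "payoff_bound P S \<beta> r c z = (\<Sum>t. ennreal (\<beta> ^ t) *
     ((\<integral>\<^sup>+x. ennreal \<bar>c x\<bar> \<partial>kpow P S t z) + (\<integral>\<^sup>+x. ennreal \<bar>r x\<bar> \<partial>kpow P S t z)))"

lemma abs_stopped_payoff_le:
  fixes \<beta> :: real and a b :: "nat \<Rightarrow> real"
  assumes "0 \<le> \<beta>"
  shows "ennreal \<bar>(\<Sum>t<k. \<beta> ^ t * a t) + \<beta> ^ k * b k\<bar>
           \<le> (\<Sum>t. ennreal (\<beta> ^ t) * (ennreal \<bar>a t\<bar> + ennreal \<bar>b t\<bar>))"
proof -
  have "\<bar>(\<Sum>t<k. \<beta> ^ t * a t) + \<beta> ^ k * b k\<bar> \<le> (\<Sum>t<k. \<bar>\<beta> ^ t * a t\<bar>) + \<bar>\<beta> ^ k * b k\<bar>"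
    by (rule order_trans[OF abs_triangle_ineq add_mono[OF sum_abs order_refl]])
  also have "\<dots> = (\<Sum>t<k. \<beta> ^ t * \<bar>a t\<bar>) + \<beta> ^ k * \<bar>b k\<bar>"
    using assms by (simp add: abs_mult)
  also have "\<dots> \<le> (\<Sum>t<k. \<beta> ^ t * (\<bar>a t\<bar> + \<bar>b t\<bar>)) + \<beta> ^ k * (\<bar>a k\<bar> + \<bar>b k\<bar>)"
    using assms by (intro add_mono sum_mono mult_left_mono) auto
  also have "\<dots> = (\<Sum>t<Suc k. \<beta> ^ t * (\<bar>a t\<bar> + \<bar>b t\<bar>))" by simp
  finally have "ennreal \<bar>(\<Sum>t<k. \<beta> ^ t * a t) + \<beta> ^ k * b k\<bar>
      \<le> ennreal (\<Sum>t<Suc k. \<beta> ^ t * (\<bar>a t\<bar> + \<bar>b t\<bar>))"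
    by (rule ennreal_leI)
  also have "\<dots> = (\<Sum>t<Suc k. ennreal (\<beta> ^ t) * (ennreal \<bar>a t\<bar> + ennreal \<bar>b t\<bar>))"
    using assms by (subst sum_ennreal[symmetric]) (auto simp: ennreal_mult ennreal_plus)
  also have "\<dots> \<le> (\<Sum>t. ennreal (\<beta> ^ t) * (ennreal \<bar>a t\<bar> + ennreal \<bar>b t\<bar>))"
    by (rule sum_le_suminf) auto
  finally show ?thesis .
qed

context markov_process
begin

lemma nn_integral_abs_payoff_le:
  assumes z: "z \<in> space S" and \<beta>: "0 \<le> \<beta>"
    and r: "r \<in> borel_measurable S" and c: "c \<in> borel_measurable S"
  shows "(\<integral>\<^sup>+\<omega>. ennreal \<bar>(\<Sum>t<\<tau> \<omega>. \<beta> ^ t * c (Z t \<omega>)) + \<beta> ^ (\<tau> \<omega>) * r (Z (\<tau> \<omega>) \<omega>)\<bar> \<partial>M z)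
         \<le> payoff_bound P S \<beta> r c z"
proof -
  have "(\<integral>\<^sup>+\<omega>. ennreal \<bar>(\<Sum>t<\<tau> \<omega>. \<beta> ^ t * c (Z t \<omega>)) + \<beta> ^ (\<tau> \<omega>) * r (Z (\<tau> \<omega>) \<omega>)\<bar> \<partial>M z)
      \<le> (\<integral>\<^sup>+\<omega>. (\<Sum>t. ennreal (\<beta> ^ t) * (ennreal \<bar>c (Z t \<omega>)\<bar> + ennreal \<bar>r (Z t \<omega>)\<bar>)) \<partial>M z)"
    by (rule nn_integral_mono) (rule abs_stopped_payoff_le[OF \<beta>])
  also have "\<dots> = (\<Sum>t. \<integral>\<^sup>+\<omega>. ennreal (\<beta> ^ t) * (ennreal \<bar>c (Z t \<omega>)\<bar> + ennreal \<bar>r (Z t \<omega>)\<bar>) \<partial>M z)"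
    by (rule nn_integral_suminf) (use Z_measurable[OF z] r c in measurable)
  also have "\<dots> = payoff_bound P S \<beta> r c z"
    unfolding payoff_bound_def
  proof (rule suminf_cong)
    fix t
    have "(\<integral>\<^sup>+\<omega>. ennreal (\<beta> ^ t) * (ennreal \<bar>c (Z t \<omega>)\<bar> + ennreal \<bar>r (Z t \<omega>)\<bar>) \<partial>M z)
       = ennreal (\<beta> ^ t) * ((\<integral>\<^sup>+\<omega>. ennreal \<bar>c (Z t \<omega>)\<bar> \<partial>M z) + (\<integral>\<^sup>+\<omega>. ennreal \<bar>r (Z t \<omega>)\<bar> \<partial>M z))"
      by (subst nn_integral_cmult)
         (use Z_measurable[OF z] r c in \<open>auto intro!: nn_integral_add arg_cong2[where f="(*)"]\<close>)
    then show "(\<integral>\<^sup>+\<omega>. ennreal (\<beta> ^ t) * (ennreal \<bar>c (Z t \<omega>)\<bar> + ennreal \<bar>r (Z t \<omega>)\<bar>) \<partial>M z)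
       = ennreal (\<beta> ^ t) * ((\<integral>\<^sup>+x. ennreal \<bar>c x\<bar> \<partial>kpow P S t z) + (\<integral>\<^sup>+x. ennreal \<bar>r x\<bar> \<partial>kpow P S t z))"
      using nn_integral_Z_eq_kpow[OF z, of "\<lambda>x. ennreal \<bar>c x\<bar>" t]
        nn_integral_Z_eq_kpow[OF z, of "\<lambda>x. ennreal \<bar>r x\<bar>" t] r c by simp
  qed
  finally show ?thesis .
qed

lemma vstar_bounds:
  assumes z: "z \<in> space S" and \<beta>: "0 \<le> \<beta>"
    and r: "r \<in> borel_measurable S" and c: "c \<in> borel_measurable S"
    and fin: "payoff_bound P S \<beta> r c z < \<infinity>"
  shows "r z \<le> vstar M F Z \<beta> r c z" "vstar M F Z \<beta> r c z \<le> enn2real (payoff_bound P S \<beta> r c z)"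
proof -
  interpret prob_space "M z" using prob[OF z] .
  let ?pay = "\<lambda>\<tau> \<omega>. (\<Sum>t<\<tau> \<omega>. \<beta> ^ t * c (Z t \<omega>)) + \<beta> ^ (\<tau> \<omega>) * r (Z (\<tau> \<omega>) \<omega>)"
  have ub: "integral\<^sup>L (M z) (?pay \<tau>) \<le> enn2real (payoff_bound P S \<beta> r c z)" for \<tau>
  proof (cases "integrable (M z) (?pay \<tau>)")
    case True
    have "ennreal (norm (integral\<^sup>L (M z) (?pay \<tau>))) \<le> (\<integral>\<^sup>+\<omega>. norm (?pay \<tau> \<omega>) \<partial>M z)"
      by (rule integral_norm_bound_ennreal[OF True])
    also have "\<dots> \<le> payoff_bound P S \<beta> r c z"
      using nn_integral_abs_payoff_le[OF z \<beta> r c, of \<tau>] by simp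
    finally have "norm (integral\<^sup>L (M z) (?pay \<tau>)) \<le> enn2real (payoff_bound P S \<beta> r c z)"
      using enn2real_mono fin by fastforce
    then show ?thesis by simp
  qed (simp add: not_integrable_integral_eq)
  have bdd: "bdd_above ((\<lambda>\<tau>. integral\<^sup>L (M z) (?pay \<tau>)) ` {\<tau>. stopping_time F \<tau>})"
    using ub by (intro bdd_aboveI) auto
  show "vstar M F Z \<beta> r c z \<le> enn2real (payoff_bound P S \<beta> r c z)"
    unfolding vstar_def using stopping_time_const by (intro cSUP_least ub) blast
  have "integral\<^sup>L (M z) (?pay (\<lambda>_. 0)) = integral\<^sup>L (M z) (\<lambda>_. r z)"
    by (rule integral_cong_AE) (use init[OF z] measurable_compose[OF Z_measurable[OF z] r] in auto)
  moreover have "integral\<^sup>L (M z) (?pay (\<lambda>_. 0)) \<le> vstar M F Z \<beta> r c z"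
    unfolding vstar_def by (rule cSUP_upper2[OF bdd, of "\<lambda>_. 0"]) (auto intro: stopping_time_const)
  ultimately show "r z \<le> vstar M F Z \<beta> r c z" by (simp add: prob_space)
qed

end

lemma suminf_geometric_ennreal:
  fixes q :: real
  assumes "0 \<le> q" "q < 1"
  shows "(\<Sum>j. ennreal (q ^ j)) = ennreal (1 / (1 - q))"
proof -
  have "(\<lambda>j. ennreal (q ^ j)) sums ennreal (1 / (1 - q))"
    using geometric_sums[of q] assms by (subst sums_ennreal) auto
  then show ?thesis by (rule sums_unique[symmetric])
qed

locale drift_stopping_problem = markov_process +
  fixes \<beta> :: real and r c g :: "'a \<Rightarrow> real" and n :: nat and mbar d m' d' :: real
  assumes beta: "0 < \<beta>" "\<beta> < 1"
    and r_meas: "r \<in> borel_measurable S" and c_meas: "c \<in> borel_measurable S"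
    and g_meas: "g \<in> borel_measurable S" and g_nonneg: "\<And>z. 0 \<le> g z"
    and A_par: "0 \<le> mbar" "0 \<le> d"
    and A_r: "\<And>z. z \<in> space S \<Longrightarrow> (\<integral>\<^sup>+ z'. ennreal \<bar>r z'\<bar> \<partial>(kpow P S n z)) \<le> ennreal (g z)"
    and A_c: "\<And>z. z \<in> space S \<Longrightarrow> (\<integral>\<^sup>+ z'. ennreal \<bar>c z'\<bar> \<partial>(kpow P S n z)) \<le> ennreal (g z)"
    and A_drift: "\<And>z. z \<in> space S \<Longrightarrow> (\<integral>\<^sup>+ z'. ennreal (g z') \<partial>(P z)) \<le> ennreal (mbar * g z + d)"
    and m'd'_pos: "0 < m'" "0 < d'"
    and m'd'_cond: "mbar + 2 * m' > 1" "\<beta> * (mbar + 2 * m') < 1" "d' \<ge> d / (mbar + 2 * m' - 1)"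
begin

definition drift_rate :: real where "drift_rate = mbar + 2 * m'"

definition weight_constant :: real where "weight_constant = 1 / m' + 2 / (1 - \<beta> * drift_rate)"

lemma drift_rate_bounds:
  "1 < drift_rate" "\<beta> * drift_rate < 1" "mbar \<le> drift_rate" "d \<le> (drift_rate - 1) * d'"
proof -
  show "1 < drift_rate" "\<beta> * drift_rate < 1" using m'd'_cond by (auto simp: drift_rate_def)
  show "mbar \<le> drift_rate" using m'd'_pos by (simp add: drift_rate_def)
  have "d / (drift_rate - 1) \<le> d'" using m'd'_cond by (simp add: drift_rate_def)
  then show "d \<le> (drift_rate - 1) * d'"
    using \<open>1 < drift_rate\<close> by (simp add: divide_le_eq mult.commute)
qed

lemma weight_constant_nonneg: "0 \<le> weight_constant"
  using drift_rate_bounds m'd'_pos by (simp add: weight_constant_def)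

lemma sets_P: "z \<in> space S \<Longrightarrow> sets (P z) = sets S"
  using measurable_space[OF kernel] by (simp add: space_prob_algebra)

lemma nn_integral_drift_weight:
  assumes z: "z \<in> space S"
  shows "(\<integral>\<^sup>+x. ennreal (g x + d') \<partial>P z) \<le> ennreal drift_rate * ennreal (g z + d')"
proof -
  interpret prob_space "P z" using measurable_space[OF kernel z] by (simp add: space_prob_algebra)
  have "(\<integral>\<^sup>+x. ennreal (g x + d') \<partial>P z) = (\<integral>\<^sup>+x. ennreal (g x) \<partial>P z) + (\<integral>\<^sup>+x. ennreal d' \<partial>P z)"
    using g_meas sets_P[OF z] g_nonneg m'd'_pos
    by (subst nn_integral_add[symmetric]) (auto simp: ennreal_plus cong: measurable_cong_sets)
  also have "\<dots> \<le> ennreal (mbar * g z + d) + ennreal d'"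
    using A_drift[OF z] by (simp add: emeasure_space_1)
  also have "\<dots> = ennreal (mbar * g z + d + d')"
    using A_par g_nonneg[of z] m'd'_pos by (simp add: ennreal_plus)
  also have "\<dots> \<le> ennreal (drift_rate * (g z + d'))"
  proof (rule ennreal_leI)
    have "mbar * g z \<le> drift_rate * g z"
      using drift_rate_bounds g_nonneg by (simp add: mult_right_mono)
    then show "mbar * g z + d + d' \<le> drift_rate * (g z + d')"
      using drift_rate_bounds(4) by (simp add: algebra_simps)
  qed
  finally show ?thesis
    using drift_rate_bounds g_nonneg[of z] m'd'_pos by (simp add: ennreal_mult)
qed

lemma nn_integral_kpow_drift_weight:
  assumes z: "z \<in> space S"
  shows "(\<integral>\<^sup>+x. ennreal (g x + d') \<partial>kpow P S k z) \<le> ennreal (drift_rate ^ k) * ennreal (g z + d')"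
proof (induction k)
  case 0
  then show ?case using z g_meas by (simp add: nn_integral_return)
next
  case (Suc k)
  have P_meas: "P \<in> kpow P S k z \<rightarrow>\<^sub>M subprob_algebra S"
    using measurable_prob_algebraD[OF kernel] sets_kpow[OF kernel z] by (simp cong: measurable_cong_sets)
  have "(\<integral>\<^sup>+x. ennreal (g x + d') \<partial>kpow P S (Suc k) z)
      = (\<integral>\<^sup>+x. (\<integral>\<^sup>+y. ennreal (g y + d') \<partial>P x) \<partial>kpow P S k z)"
    using nn_integral_bind[OF _ P_meas] g_meas by simp
  also have "\<dots> \<le> (\<integral>\<^sup>+x. ennreal drift_rate * ennreal (g x + d') \<partial>kpow P S k z)"
    by (rule nn_integral_mono) (use nn_integral_drift_weight space_kpow[OF kernel z] in auto)
  also have "\<dots> = ennreal drift_rate * (\<integral>\<^sup>+x. ennreal (g x + d') \<partial>kpow P S k z)"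
    using g_meas sets_kpow[OF kernel z] by (subst nn_integral_cmult) (auto cong: measurable_cong_sets)
  also have "\<dots> \<le> ennreal drift_rate * (ennreal (drift_rate ^ k) * ennreal (g z + d'))"
    by (rule mult_left_mono[OF Suc]) simp
  finally show ?case
    using drift_rate_bounds by (simp add: ennreal_mult mult.assoc)
qed

lemma nn_integral_kpow_shift_le:
  assumes z: "z \<in> space S" and h: "h \<in> borel_measurable S"
    and hA: "\<And>x. x \<in> space S \<Longrightarrow> (\<integral>\<^sup>+ y. ennreal \<bar>h y\<bar> \<partial>(kpow P S n x)) \<le> ennreal (g x)"
  shows "(\<integral>\<^sup>+x. ennreal \<bar>h x\<bar> \<partial>kpow P S (k + n) z) \<le> ennreal (drift_rate ^ k) * ennreal (g z + d')"
proof -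
  have "(\<integral>\<^sup>+x. ennreal \<bar>h x\<bar> \<partial>kpow P S (k + n) z)
      = (\<integral>\<^sup>+x. (\<integral>\<^sup>+y. ennreal \<bar>h y\<bar> \<partial>kpow P S n x) \<partial>kpow P S k z)"
    using nn_integral_bind[OF _ kpow_measurable_on_kpow[OF kernel z], of "\<lambda>x. ennreal \<bar>h x\<bar>" k n]
      kpow_add[OF kernel z, of k n] h by simp
  also have "\<dots> \<le> (\<integral>\<^sup>+x. ennreal (g x + d') \<partial>kpow P S k z)"
  proof (rule nn_integral_mono)
    fix x assume "x \<in> space (kpow P S k z)"
    then have "(\<integral>\<^sup>+y. ennreal \<bar>h y\<bar> \<partial>kpow P S n x) \<le> ennreal (g x)"
      using hA space_kpow[OF kernel z] by simp
    also have "\<dots> \<le> ennreal (g x + d')" using m'd'_pos by (intro ennreal_leI) simp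
    finally show "(\<integral>\<^sup>+y. ennreal \<bar>h y\<bar> \<partial>kpow P S n x) \<le> ennreal (g x + d')" .
  qed
  also have "\<dots> \<le> ennreal (drift_rate ^ k) * ennreal (g z + d')"
    by (rule nn_integral_kpow_drift_weight[OF z])
  finally show ?thesis .
qed

lemma payoff_bound_tail_le:
  assumes z: "z \<in> space S"
  shows "(\<Sum>j. ennreal (\<beta> ^ (j + n)) * ((\<integral>\<^sup>+x. ennreal \<bar>c x\<bar> \<partial>kpow P S (j + n) z)
            + (\<integral>\<^sup>+x. ennreal \<bar>r x\<bar> \<partial>kpow P S (j + n) z)))
         \<le> ennreal (2 / (1 - \<beta> * drift_rate)) * ennreal (g z + d')"
proof -
  define w where "w = g z + d'"
  have w: "0 \<le> w" using g_nonneg m'd'_pos by (simp add: w_def)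
  have q: "0 \<le> \<beta> * drift_rate" "\<beta> * drift_rate < 1" using beta drift_rate_bounds by auto
  have "(\<Sum>j. ennreal (\<beta> ^ (j + n)) * ((\<integral>\<^sup>+x. ennreal \<bar>c x\<bar> \<partial>kpow P S (j + n) z)
            + (\<integral>\<^sup>+x. ennreal \<bar>r x\<bar> \<partial>kpow P S (j + n) z)))
      \<le> (\<Sum>j. ennreal ((\<beta> * drift_rate) ^ j) * ennreal (2 * w))"
  proof (intro suminf_le allI)
    fix j
    have "ennreal (\<beta> ^ (j + n)) \<le> ennreal (\<beta> ^ j)"
      using beta by (intro ennreal_leI) (simp add: power_add power_le_one mult_left_le)
    moreover have "(\<integral>\<^sup>+x. ennreal \<bar>c x\<bar> \<partial>kpow P S (j + n) z) + (\<integral>\<^sup>+x. ennreal \<bar>r x\<bar> \<partial>kpow P S (j + n) z)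
        \<le> ennreal (drift_rate ^ j) * ennreal w + ennreal (drift_rate ^ j) * ennreal w"
      unfolding w_def
      by (intro add_mono nn_integral_kpow_shift_le[OF z c_meas A_c] nn_integral_kpow_shift_le[OF z r_meas A_r])
    ultimately have "ennreal (\<beta> ^ (j + n)) * ((\<integral>\<^sup>+x. ennreal \<bar>c x\<bar> \<partial>kpow P S (j + n) z)
            + (\<integral>\<^sup>+x. ennreal \<bar>r x\<bar> \<partial>kpow P S (j + n) z))
        \<le> ennreal (\<beta> ^ j) * (ennreal (drift_rate ^ j) * ennreal w + ennreal (drift_rate ^ j) * ennreal w)"
      by (rule mult_mono) auto
    also have "\<dots> = ennreal ((\<beta> * drift_rate) ^ j) * ennreal (2 * w)"
      using beta drift_rate_bounds w
      by (simp add: ennreal_mult[symmetric] ennreal_plus[symmetric] power_mult_distrib algebra_simps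
               del: ennreal_plus)
    finally show "ennreal (\<beta> ^ (j + n)) * ((\<integral>\<^sup>+x. ennreal \<bar>c x\<bar> \<partial>kpow P S (j + n) z)
            + (\<integral>\<^sup>+x. ennreal \<bar>r x\<bar> \<partial>kpow P S (j + n) z))
        \<le> ennreal ((\<beta> * drift_rate) ^ j) * ennreal (2 * w)" .
  qed auto
  also have "\<dots> = ennreal (1 / (1 - \<beta> * drift_rate)) * ennreal (2 * w)"
    using suminf_geometric_ennreal[OF q] by (simp add: ennreal_suminf_multc)
  also have "\<dots> = ennreal (2 / (1 - \<beta> * drift_rate)) * ennreal (g z + d')"
    using q w by (simp add: ennreal_mult[symmetric] w_def)
  finally show ?thesis .
qed

lemma payoff_bound_head_le:
  assumes z: "z \<in> space S"
  shows "(\<Sum>j<n. ennreal (\<beta> ^ j) * ((\<integral>\<^sup>+x. ennreal \<bar>c x\<bar> \<partial>kpow P S j z)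
            + (\<integral>\<^sup>+x. ennreal \<bar>r x\<bar> \<partial>kpow P S j z)))
         \<le> ennreal \<bar>r z\<bar> + ennreal (1 / m') * ell P S n m' d' g r c z"
proof -
  define a where "a j = (\<integral>\<^sup>+x. ennreal \<bar>c x\<bar> \<partial>kpow P S j z)" for j
  define b where "b j = (\<integral>\<^sup>+x. ennreal \<bar>r x\<bar> \<partial>kpow P S j z)" for j
  have "(\<Sum>j<n. ennreal (\<beta> ^ j) * (a j + b j)) \<le> (\<Sum>j<n. a j + b j)"
  proof (rule sum_mono)
    fix j
    have "ennreal (\<beta> ^ j) \<le> 1" using beta by (simp add: power_le_one)
    then show "ennreal (\<beta> ^ j) * (a j + b j) \<le> a j + b j"
      using mult_right_mono[of "ennreal (\<beta> ^ j)" 1 "a j + b j"] by simp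
  qed
  also have "\<dots> \<le> b 0 + ((\<Sum>j\<in>{1..<n}. b j) + (\<Sum>j<n. a j))"
  proof (cases n)
    case (Suc k)
    then have "{..<n} = insert 0 {1..<n}" by auto
    then show ?thesis by (simp add: sum.distrib ac_simps)
  qed simp
  also have "(\<Sum>j\<in>{1..<n}. b j) + (\<Sum>j<n. a j) \<le> ennreal (1 / m') * ell P S n m' d' g r c z"
  proof -
    have "ennreal m' * ((\<Sum>j\<in>{1..<n}. b j) + (\<Sum>j<n. a j)) \<le> ell P S n m' d' g r c z"
      by (simp add: ell_def a_def b_def add.assoc)
    then have "ennreal (1 / m') * (ennreal m' * ((\<Sum>j\<in>{1..<n}. b j) + (\<Sum>j<n. a j)))
        \<le> ennreal (1 / m') * ell P S n m' d' g r c z"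
      by (rule mult_left_mono) simp
    then show ?thesis
      using m'd'_pos by (simp add: mult.assoc[symmetric] ennreal_mult[symmetric])
  qed
  finally show ?thesis
    using z r_meas by (simp add: a_def b_def nn_integral_return add_mono)
qed

lemma payoff_bound_le_weight:
  assumes z: "z \<in> space S"
  shows "payoff_bound P S \<beta> r c z \<le> ennreal \<bar>r z\<bar> + ennreal weight_constant * ell P S n m' d' g r c z"
proof -
  let ?L = "ell P S n m' d' g r c z"
  have "ennreal (g z + d') \<le> ?L"
    using g_nonneg m'd'_pos by (simp add: ell_def ennreal_plus less_imp_le add.assoc)
  then have tail: "ennreal (2 / (1 - \<beta> * drift_rate)) * ennreal (g z + d')
      \<le> ennreal (2 / (1 - \<beta> * drift_rate)) * ?L"
    by (rule mult_left_mono) simp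
  define u where "u t = ennreal (\<beta> ^ t) * ((\<integral>\<^sup>+x. ennreal \<bar>c x\<bar> \<partial>kpow P S t z)
      + (\<integral>\<^sup>+x. ennreal \<bar>r x\<bar> \<partial>kpow P S t z))" for t
  have "payoff_bound P S \<beta> r c z = (\<Sum>j. u (j + n)) + (\<Sum>j<n. u j)"
    unfolding payoff_bound_def u_def[symmetric] by (rule suminf_offset) simp
  also have "\<dots> \<le> ennreal (2 / (1 - \<beta> * drift_rate)) * ?L + (ennreal \<bar>r z\<bar> + ennreal (1 / m') * ?L)"
    using add_mono[OF order_trans[OF payoff_bound_tail_le[OF z] tail] payoff_bound_head_le[OF z]]
    by (simp add: u_def)
  also have "\<dots> = ennreal \<bar>r z\<bar> + ennreal weight_constant * ?L"
  proof -
    have "ennreal weight_constant = ennreal (1 / m') + ennreal (2 / (1 - \<beta> * drift_rate))"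
      unfolding weight_constant_def by (rule ennreal_plus) (use drift_rate_bounds m'd'_pos in auto)
    then show ?thesis by (simp add: distrib_right algebra_simps)
  qed
  finally show ?thesis .
qed

lemma abs_vstar_le_weight:
  assumes x: "x \<in> space S" and fin: "ell P S n m' d' g r c x < \<infinity>"
  shows "payoff_bound P S \<beta> r c x < \<infinity>"
    "\<bar>vstar M F Z \<beta> r c x\<bar> \<le> enn2real (payoff_bound P S \<beta> r c x)"
    "\<bar>vstar M F Z \<beta> r c x\<bar> \<le> \<bar>r x\<bar> + weight_constant * enn2real (ell P S n m' d' g r c x)"
proof -
  let ?L = "ell P S n m' d' g r c x" and ?B = "payoff_bound P S \<beta> r c x"
  have B_le: "?B \<le> ennreal (\<bar>r x\<bar> + weight_constant * enn2real ?L)"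
    using payoff_bound_le_weight[OF x] fin weight_constant_nonneg
    by (cases ?L) (auto simp: ennreal_plus ennreal_mult)
  then show fin': "?B < \<infinity>" by (simp add: le_less_trans)
  have "ennreal \<bar>r x\<bar> \<le> ennreal (\<beta> ^ 0) * ((\<integral>\<^sup>+y. ennreal \<bar>c y\<bar> \<partial>kpow P S 0 x)
      + (\<integral>\<^sup>+y. ennreal \<bar>r y\<bar> \<partial>kpow P S 0 x))"
    using x r_meas c_meas by (simp add: nn_integral_return)
  also have "\<dots> \<le> ?B"
    unfolding payoff_bound_def by (rule sum_le_suminf[OF summableI, of "{0}", simplified])
  finally have "\<bar>r x\<bar> \<le> enn2real ?B"
    using enn2real_mono fin' by fastforce
  then show "\<bar>vstar M F Z \<beta> r c x\<bar> \<le> enn2real ?B"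
    using vstar_bounds[OF x _ r_meas c_meas fin'] beta by force
  moreover have "enn2real ?B \<le> \<bar>r x\<bar> + weight_constant * enn2real ?L"
    using B_le weight_constant_nonneg by (simp add: enn2real_leI)
  ultimately show "\<bar>vstar M F Z \<beta> r c x\<bar> \<le> \<bar>r x\<bar> + weight_constant * enn2real ?L"
    by linarith
qed

lemma nn_integral_payoff_bound:
  assumes z: "z \<in> space S"
  shows "(\<integral>\<^sup>+x. payoff_bound P S \<beta> r c x \<partial>P z)
      = (\<Sum>t. ennreal (\<beta> ^ t) * ((\<integral>\<^sup>+x. ennreal \<bar>c x\<bar> \<partial>kpow P S (Suc t) z)
          + (\<integral>\<^sup>+x. ennreal \<bar>r x\<bar> \<partial>kpow P S (Suc t) z)))"
proof -
  have kpow_subprob: "kpow P S t \<in> S \<rightarrow>\<^sub>M subprob_algebra S" for t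
    by (rule measurable_prob_algebraD[OF kpow_measurable[OF kernel]])
  have "(\<integral>\<^sup>+x. payoff_bound P S \<beta> r c x \<partial>P z)
      = (\<Sum>t. \<integral>\<^sup>+x. ennreal (\<beta> ^ t) * ((\<integral>\<^sup>+y. ennreal \<bar>c y\<bar> \<partial>kpow P S t x)
          + (\<integral>\<^sup>+y. ennreal \<bar>r y\<bar> \<partial>kpow P S t x)) \<partial>P z)"
    unfolding payoff_bound_def
    by (rule nn_integral_suminf) (use kpow_subprob r_meas c_meas sets_P[OF z] in measurable)
  also have "\<dots> = (\<Sum>t. ennreal (\<beta> ^ t) * ((\<integral>\<^sup>+x. ennreal \<bar>c x\<bar> \<partial>kpow P S (Suc t) z)
      + (\<integral>\<^sup>+x. ennreal \<bar>r x\<bar> \<partial>kpow P S (Suc t) z)))"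
  proof (rule suminf_cong)
    fix t
    have "(\<lambda>x. \<integral>\<^sup>+y. ennreal \<bar>h y\<bar> \<partial>kpow P S t x) \<in> borel_measurable (P z)"
      if "h \<in> borel_measurable S" for h
      using that kpow_subprob sets_P[OF z] by (measurable; simp cong: measurable_cong_sets)
    then show "(\<integral>\<^sup>+x. ennreal (\<beta> ^ t) * ((\<integral>\<^sup>+y. ennreal \<bar>c y\<bar> \<partial>kpow P S t x)
          + (\<integral>\<^sup>+y. ennreal \<bar>r y\<bar> \<partial>kpow P S t x)) \<partial>P z)
      = ennreal (\<beta> ^ t) * ((\<integral>\<^sup>+x. ennreal \<bar>c x\<bar> \<partial>kpow P S (Suc t) z)
          + (\<integral>\<^sup>+x. ennreal \<bar>r x\<bar> \<partial>kpow P S (Suc t) z))"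
      using r_meas c_meas by (simp add: nn_integral_cmult nn_integral_add nn_integral_kpow_Suc[OF kernel z])
  qed
  finally show ?thesis .
qed

lemma nn_integral_payoff_bound_le:
  assumes z: "z \<in> space S"
  shows "ennreal \<beta> * (\<integral>\<^sup>+x. payoff_bound P S \<beta> r c x \<partial>P z) \<le> payoff_bound P S \<beta> r c z"
proof -
  define u where "u t = ennreal (\<beta> ^ t) * ((\<integral>\<^sup>+x. ennreal \<bar>c x\<bar> \<partial>kpow P S t z)
      + (\<integral>\<^sup>+x. ennreal \<bar>r x\<bar> \<partial>kpow P S t z))" for t
  have "ennreal \<beta> * (\<integral>\<^sup>+x. payoff_bound P S \<beta> r c x \<partial>P z) = (\<Sum>t. u (t + 1))"
    unfolding nn_integral_payoff_bound[OF z] u_def ennreal_suminf_cmult[symmetric]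
    using beta by (intro suminf_cong) (simp add: ennreal_mult mult.assoc)
  also have "\<dots> \<le> (\<Sum>t. u (t + 1)) + (\<Sum>j<1. u j)" by simp
  also have "\<dots> = payoff_bound P S \<beta> r c z"
    unfolding payoff_bound_def u_def[symmetric] by (rule suminf_offset[symmetric]) simp
  finally show ?thesis .
qed

lemma nn_integral_abs_vstar_finite:
  assumes fin: "\<And>x. x \<in> space S \<Longrightarrow> ell P S n m' d' g r c x < \<infinity>" and w: "w \<in> space S"
  shows "(\<integral>\<^sup>+x. ennreal \<bar>vstar M F Z \<beta> r c x\<bar> \<partial>P w) < \<infinity>"
proof -
  have "(\<integral>\<^sup>+x. ennreal \<bar>vstar M F Z \<beta> r c x\<bar> \<partial>P w) \<le> (\<integral>\<^sup>+x. payoff_bound P S \<beta> r c x \<partial>P w)"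
  proof (rule nn_integral_mono)
    fix x assume "x \<in> space (P w)"
    then have x: "x \<in> space S" using sets_eq_imp_space_eq[OF sets_P[OF w]] by simp
    have "ennreal \<bar>vstar M F Z \<beta> r c x\<bar> \<le> ennreal (enn2real (payoff_bound P S \<beta> r c x))"
      using abs_vstar_le_weight(2)[OF x fin[OF x]] by (rule ennreal_leI)
    also have "\<dots> = payoff_bound P S \<beta> r c x"
      using abs_vstar_le_weight(1)[OF x fin[OF x]] by simp
    finally show "ennreal \<bar>vstar M F Z \<beta> r c x\<bar> \<le> payoff_bound P S \<beta> r c x" .
  qed
  also have "\<dots> < \<infinity>"
  proof -
    have "ennreal \<beta> * (\<integral>\<^sup>+x. payoff_bound P S \<beta> r c x \<partial>P w) < \<infinity>"
      using nn_integral_payoff_bound_le[OF w] abs_vstar_le_weight(1)[OF w fin[OF w]] by (rule le_less_trans)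
    then show ?thesis using beta by (auto simp: ennreal_mult_less_top)
  qed
  finally show ?thesis .
qed

end

section \<open>Dominated convergence\<close>

lemma integral_abs_diff_tendsto_0:
  fixes G :: "nat \<Rightarrow> 'a \<Rightarrow> real" and Gl :: "'a \<Rightarrow> real"
  assumes G_int: "\<And>k. integrable M (G k)" and Gl_int: "integrable M Gl"
    and G_nonneg: "\<And>k x. x \<in> space M \<Longrightarrow> 0 \<le> G k x"
    and Gl_nonneg: "\<And>x. x \<in> space M \<Longrightarrow> 0 \<le> Gl x"
    and G_lim: "\<And>x. x \<in> space M \<Longrightarrow> (\<lambda>k. G k x) \<longlonglongrightarrow> Gl x"
    and int_lim: "(\<lambda>k. integral\<^sup>L M (G k)) \<longlonglongrightarrow> integral\<^sup>L M Gl"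
  shows "(\<lambda>k. integral\<^sup>L M (\<lambda>x. \<bar>G k x - Gl x\<bar>)) \<longlonglongrightarrow> 0"
proof -
  have nn_eq: "(\<integral>\<^sup>+ x. norm (u x) \<partial>M) = ennreal (integral\<^sup>L M u)"
    if "integrable M u" "\<And>x. x \<in> space M \<Longrightarrow> 0 \<le> u x" for u
  proof -
    have "(\<integral>\<^sup>+ x. norm (u x) \<partial>M) = (\<integral>\<^sup>+ x. ennreal (u x) \<partial>M)"
      by (rule nn_integral_cong) (use that in auto)
    also have "\<dots> = ennreal (integral\<^sup>L M u)"
      by (rule nn_integral_eq_integral) (use that in \<open>auto intro!: AE_I2\<close>)
    finally show ?thesis .
  qed
  have G_eq: "(\<lambda>k. \<integral>\<^sup>+ x. norm (G k x) \<partial>M) = (\<lambda>k. ennreal (integral\<^sup>L M (G k)))"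
    by (intro ext nn_eq G_int G_nonneg)
  have "limsup (\<lambda>k. \<integral>\<^sup>+ x. norm (G k x) \<partial>M) = limsup (\<lambda>k. ennreal (integral\<^sup>L M (G k)))"
    unfolding G_eq ..
  also have "\<dots> = ennreal (integral\<^sup>L M Gl)"
    by (rule lim_imp_Limsup[OF _ tendsto_ennrealI[OF int_lim]]) simp
  also have "\<dots> = (\<integral>\<^sup>+ x. norm (Gl x) \<partial>M)"
    by (rule nn_eq[OF Gl_int Gl_nonneg, symmetric])
  finally have "limsup (\<lambda>k. \<integral>\<^sup>+ x. norm (G k x) \<partial>M) = (\<integral>\<^sup>+ x. norm (Gl x) \<partial>M)" .
  then have "(\<lambda>k. \<integral>\<^sup>+ x. norm (G k x - Gl x) \<partial>M) \<longlonglongrightarrow> 0"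
    by (intro Scheffe_lemma1[OF G_int Gl_int]) (use G_lim in \<open>auto intro!: AE_I2\<close>)
  then have "(\<lambda>k. enn2real (\<integral>\<^sup>+ x. norm (G k x - Gl x) \<partial>M)) \<longlonglongrightarrow> 0"
    by (intro tendsto_enn2real) simp_all
  moreover have "integral\<^sup>L M (\<lambda>x. \<bar>G k x - Gl x\<bar>) = enn2real (\<integral>\<^sup>+ x. norm (G k x - Gl x) \<partial>M)" for k
    by (subst integral_eq_nn_integral) (use G_int Gl_int in auto)
  ultimately show ?thesis by simp
qed

lemma tendsto_integral_clipped:
  fixes h :: "nat \<Rightarrow> 'a \<Rightarrow> real" and hl Gl :: "'a \<Rightarrow> real"
  assumes h_meas: "\<And>k. h k \<in> borel_measurable M" and hl_meas: "hl \<in> borel_measurable M"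
    and Gl_int: "integrable M Gl" and hl_bound: "\<And>x. x \<in> space M \<Longrightarrow> \<bar>hl x\<bar> \<le> Gl x"
    and h_lim: "\<And>x. x \<in> space M \<Longrightarrow> (\<lambda>k. h k x) \<longlonglongrightarrow> hl x"
  shows "(\<lambda>k. integral\<^sup>L M (\<lambda>x. max (- Gl x) (min (Gl x) (h k x)))) \<longlonglongrightarrow> integral\<^sup>L M hl"
proof (rule integral_dominated_convergence[OF hl_meas _ Gl_int])
  show "(\<lambda>x. max (- Gl x) (min (Gl x) (h k x))) \<in> borel_measurable M" for k
    using h_meas borel_measurable_integrable[OF Gl_int] by measurable
  show "AE x in M. norm (max (- Gl x) (min (Gl x) (h k x))) \<le> Gl x" for k
  proof (rule AE_I2)
    fix x assume "x \<in> space M"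
    then have "0 \<le> Gl x" using hl_bound[of x] by linarith
    then show "norm (max (- Gl x) (min (Gl x) (h k x))) \<le> Gl x" by auto
  qed
  show "AE x in M. (\<lambda>k. max (- Gl x) (min (Gl x) (h k x))) \<longlonglongrightarrow> hl x"
  proof (rule AE_I2)
    fix x assume x: "x \<in> space M"
    have "(\<lambda>k. max (- Gl x) (min (Gl x) (h k x))) \<longlonglongrightarrow> max (- Gl x) (min (Gl x) (hl x))"
      by (intro tendsto_max tendsto_min tendsto_const h_lim x)
    also have "max (- Gl x) (min (Gl x) (hl x)) = hl x" using hl_bound[OF x] by auto
    finally show "(\<lambda>k. max (- Gl x) (min (Gl x) (h k x))) \<longlonglongrightarrow> hl x" .
  qed
qed

lemma tendsto_integral_Pratt:
  fixes h G :: "nat \<Rightarrow> 'a \<Rightarrow> real" and hl Gl :: "'a \<Rightarrow> real"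
  assumes h_meas: "\<And>k. h k \<in> borel_measurable M" and hl_meas: "hl \<in> borel_measurable M"
    and G_int: "\<And>k. integrable M (G k)" and Gl_int: "integrable M Gl"
    and bound: "\<And>k x. x \<in> space M \<Longrightarrow> \<bar>h k x\<bar> \<le> G k x"
    and h_lim: "\<And>x. x \<in> space M \<Longrightarrow> (\<lambda>k. h k x) \<longlonglongrightarrow> hl x"
    and G_lim: "\<And>x. x \<in> space M \<Longrightarrow> (\<lambda>k. G k x) \<longlonglongrightarrow> Gl x"
    and int_lim: "(\<lambda>k. integral\<^sup>L M (G k)) \<longlonglongrightarrow> integral\<^sup>L M Gl"
  shows "(\<lambda>k. integral\<^sup>L M (h k)) \<longlonglongrightarrow> integral\<^sup>L M hl"
proof -
  have hl_bound: "\<bar>hl x\<bar> \<le> Gl x" if x: "x \<in> space M" for x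
    by (rule LIMSEQ_le[OF tendsto_rabs[OF h_lim[OF x]] G_lim[OF x]]) (use bound x in auto)
  have G_nonneg: "0 \<le> G k x" if "x \<in> space M" for k x
    using bound[OF that, of k] by linarith
  have Gl_nonneg: "0 \<le> Gl x" if "x \<in> space M" for x
    using hl_bound[OF that] by linarith
  have h_int: "integrable M (h k)" for k
    by (rule Bochner_Integration.integrable_bound[OF G_int[of k] h_meas[of k]], rule AE_I2)
       (metis bound abs_ge_self order_trans real_norm_def)
  \<comment> \<open>clipping \<open>h k\<close> to \<open>[-Gl, Gl]\<close> costs at most \<open>|G k - Gl|\<close>, whose integral tends to \<open>0\<close>\<close>
  define cl where "cl k x = max (- Gl x) (min (Gl x) (h k x))" for k x
  have cl_int: "integrable M (cl k)" for k
    unfolding cl_def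
    by (rule Bochner_Integration.integrable_bound[OF Gl_int])
       (use h_meas borel_measurable_integrable[OF Gl_int] hl_bound in \<open>auto intro!: AE_I2\<close>)
  have "(\<lambda>k. integral\<^sup>L M (h k) - integral\<^sup>L M (cl k)) \<longlonglongrightarrow> 0"
  proof (rule Lim_null_comparison[OF always_eventually integral_abs_diff_tendsto_0])
    show "\<forall>k. norm (integral\<^sup>L M (h k) - integral\<^sup>L M (cl k)) \<le> integral\<^sup>L M (\<lambda>x. \<bar>G k x - Gl x\<bar>)"
    proof
      fix k
      have "\<bar>h k x - cl k x\<bar> \<le> \<bar>G k x - Gl x\<bar>" if "x \<in> space M" for x
        using bound[OF that, of k] hl_bound[OF that] unfolding cl_def
        by (auto simp: max_def min_def abs_if split: if_splits)
      then have "integral\<^sup>L M (\<lambda>x. norm (h k x - cl k x)) \<le> integral\<^sup>L M (\<lambda>x. \<bar>G k x - Gl x\<bar>)"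
        by (intro integral_mono) (use h_int cl_int G_int Gl_int in auto)
      then show "norm (integral\<^sup>L M (h k) - integral\<^sup>L M (cl k)) \<le> integral\<^sup>L M (\<lambda>x. \<bar>G k x - Gl x\<bar>)"
        using integral_norm_bound[of M "\<lambda>x. h k x - cl k x"] h_int cl_int by simp
    qed
  qed (use G_int Gl_int G_lim int_lim G_nonneg Gl_nonneg in auto)
  from tendsto_add[OF this tendsto_integral_clipped[OF h_meas hl_meas Gl_int hl_bound h_lim]]
  show ?thesis by (simp add: cl_def[abs_def])
qed

lemma has_real_derivative_integral_dominated:
  fixes \<phi> :: "real \<Rightarrow> 'a \<Rightarrow> real" and \<phi>' w :: "'a \<Rightarrow> real"
  assumes \<delta>: "0 < \<delta>"
    and \<phi>_int: "\<And>s. s \<in> {t0 - \<delta> <..< t0 + \<delta>} \<Longrightarrow> integrable M (\<phi> s)"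
    and \<phi>'_meas: "\<phi>' \<in> borel_measurable M"
    and deriv: "\<And>x. x \<in> space M \<Longrightarrow> ((\<lambda>t. \<phi> t x) has_real_derivative \<phi>' x) (at t0)"
    and w: "integrable M w"
    and dom: "\<And>x s. x \<in> space M \<Longrightarrow> s \<in> {t0 - \<delta> <..< t0 + \<delta>} \<Longrightarrow> s \<noteq> t0 \<Longrightarrow>
        \<bar>(\<phi> s x - \<phi> t0 x) / (s - t0)\<bar> \<le> w x"
  shows "((\<lambda>t. integral\<^sup>L M (\<phi> t)) has_real_derivative integral\<^sup>L M \<phi>') (at t0)"
proof -
  let ?I = "{t0 - \<delta> <..< t0 + \<delta>}"
  have t0: "t0 \<in> ?I" using \<delta> by simp
  have "((\<lambda>s. (integral\<^sup>L M (\<phi> s) - integral\<^sup>L M (\<phi> t0)) / (s - t0)) \<longlongrightarrow> integral\<^sup>L M \<phi>') (at t0 within ?I)"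
    unfolding tendsto_at_iff_sequentially
  proof (intro allI impI)
    fix Y assume Y: "\<forall>k. Y k \<in> ?I - {t0}" and Y_lim: "Y \<longlonglongrightarrow> t0"
    have quotient_int: "integrable M (\<lambda>x. (\<phi> (Y k) x - \<phi> t0 x) / (Y k - t0))" for k
      using \<phi>_int[of "Y k"] \<phi>_int[OF t0] Y by auto
    have "(\<lambda>k. integral\<^sup>L M (\<lambda>x. (\<phi> (Y k) x - \<phi> t0 x) / (Y k - t0))) \<longlonglongrightarrow> integral\<^sup>L M \<phi>'"
    proof (rule integral_dominated_convergence[OF \<phi>'_meas _ w])
      show "(\<lambda>x. (\<phi> (Y k) x - \<phi> t0 x) / (Y k - t0)) \<in> borel_measurable M" for k
        using quotient_int by (rule borel_measurable_integrable)
      show "AE x in M. norm ((\<phi> (Y k) x - \<phi> t0 x) / (Y k - t0)) \<le> w x" for k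
        using dom Y[rule_format, of k] by (intro AE_I2) simp
      show "AE x in M. (\<lambda>k. (\<phi> (Y k) x - \<phi> t0 x) / (Y k - t0)) \<longlonglongrightarrow> \<phi>' x"
      proof (rule AE_I2)
        fix x assume "x \<in> space M"
        then have "((\<lambda>t. (\<phi> t x - \<phi> t0 x) / (t - t0)) \<longlongrightarrow> \<phi>' x) (at t0)"
          using deriv unfolding has_field_derivative_iff by blast
        then show "(\<lambda>k. (\<phi> (Y k) x - \<phi> t0 x) / (Y k - t0)) \<longlonglongrightarrow> \<phi>' x"
          using Y Y_lim unfolding tendsto_at_iff_sequentially by (auto simp: comp_def)
      qed
    qed
    then show "((\<lambda>s. (integral\<^sup>L M (\<phi> s) - integral\<^sup>L M (\<phi> t0)) / (s - t0)) \<circ> Y) \<longlonglongrightarrow> integral\<^sup>L M \<phi>'"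
      using \<phi>_int[OF t0] \<phi>_int Y by (simp add: comp_def)
  qed
  moreover have "at t0 within ?I = at t0" by (rule at_within_open) (use \<delta> in auto)
  ultimately show ?thesis unfolding has_field_derivative_iff by simp
qed

section \<open>Functions along a coordinate line\<close>

lemma upd_nth [simp]: "upd z i t $ i = t"
  by (simp add: upd_def)

lemma upd_upd [simp]: "upd (upd z i t) i s = upd z i s"
  by (simp add: upd_def vec_eq_iff)

lemma upd_same [simp]: "upd z i (z $ i) = z"
  by (simp add: upd_def vec_eq_iff)

lemma upd_eq_add_scaleR_axis: "upd z i t = z + (t - z $ i) *\<^sub>R axis i 1"
  by (simp add: upd_def axis_def vec_eq_iff)

lemma dist_upd: "dist (upd z i t) z = \<bar>t - z $ i\<bar>"
  by (simp add: upd_eq_add_scaleR_axis dist_norm)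

lemma continuous_on_upd: "continuous_on A (\<lambda>t. upd z i t)"
  unfolding upd_eq_add_scaleR_axis by (intro continuous_intros)

lemma eventually_upd_in_open:
  assumes "open U" "z \<in> U"
  shows "\<forall>\<^sub>F t in nhds (z $ i). upd z i t \<in> U"
proof -
  obtain e where e: "e > 0" "ball z e \<subseteq> U" using assms open_contains_ball by blast
  show ?thesis unfolding eventually_nhds_metric
  proof (intro exI[of _ e] conjI allI impI)
    fix t assume "dist t (z $ i) < e"
    then have "dist (upd z i t) z < e" by (simp add: dist_upd dist_real_def)
    then show "upd z i t \<in> U" using e by (auto simp: dist_commute)
  qed (rule e(1))
qed

lemma continuous_Dp_add_cmult:
  fixes \<psi> c G G' :: "real ^ 'm \<Rightarrow> real" and U :: "(real ^ 'm) set"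
  assumes U: "open U"
    and eq: "\<And>w. w \<in> U \<Longrightarrow> \<psi> w = c w + \<beta> * G w"
    and G_deriv: "\<And>z. z \<in> U \<Longrightarrow> ((\<lambda>t. G (upd z i t)) has_real_derivative G' z) (at (z $ i))"
    and G'_cont: "continuous_on U G'"
    and c_ex: "\<And>z. z \<in> U \<Longrightarrow> Dp_ex i c z"
    and c_cont: "continuous_on U (Dp i c)"
  shows "(\<forall>z\<in>U. Dp_ex i \<psi> z) \<and> continuous_on U (Dp i \<psi>)"
proof -
  have deriv: "((\<lambda>t. \<psi> (upd z i t)) has_real_derivative (Dp i c z + \<beta> * G' z)) (at (z $ i))"
    if z: "z \<in> U" for z
  proof -
    have "((\<lambda>t. c (upd z i t)) has_real_derivative Dp i c z) (at (z $ i))"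
      using c_ex[OF z] unfolding Dp_ex_def Dp_def using DERIV_deriv_iff_real_differentiable by blast
    then have "((\<lambda>t. c (upd z i t) + \<beta> * G (upd z i t)) has_real_derivative (Dp i c z + \<beta> * G' z)) (at (z $ i))"
      by (intro DERIV_add DERIV_cmult G_deriv z)
    moreover have "\<forall>\<^sub>F t in nhds (z $ i). c (upd z i t) + \<beta> * G (upd z i t) = \<psi> (upd z i t)"
      using eventually_upd_in_open[OF U z, of i] by eventually_elim (simp add: eq)
    ultimately show ?thesis by (rule DERIV_cong_ev[THEN iffD1, OF refl _ refl, rotated])
  qed
  have ex: "Dp_ex i \<psi> z" if "z \<in> U" for z
    using deriv[OF that] unfolding Dp_ex_def real_differentiable_def by blast
  have val: "Dp i \<psi> z = Dp i c z + \<beta> * G' z" if "z \<in> U" for z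
    using deriv[OF that] unfolding Dp_def by (rule DERIV_imp_deriv)
  have "continuous_on U (\<lambda>z. Dp i c z + \<beta> * G' z)"
    by (intro continuous_intros c_cont G'_cont)
  then have "continuous_on U (Dp i \<psi>)"
    by (rule continuous_on_cong[THEN iffD1, rotated 2]) (auto simp: val)
  with ex show ?thesis by blast
qed

lemma le_max_endpoints_if_deriv_nonzero:
  fixes D D' :: "real \<Rightarrow> real"
  assumes ab: "a \<le> b"
    and deriv: "\<And>s. s \<in> {a..b} \<Longrightarrow> (D has_real_derivative D' s) (at s)"
    and nonzero: "\<And>s. s \<in> {a<..<b} \<Longrightarrow> D' s \<noteq> 0"
    and s: "s \<in> {a..b}"
  shows "D s \<le> max (D a) (D b)"
proof (rule ccontr)
  assume "\<not> ?thesis"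
  then have gt: "D a < D s" "D b < D s" by auto
  have cont: "continuous_on {a..b} D"
    using deriv by (meson DERIV_isCont continuous_at_imp_continuous_on)
  obtain c where c: "c \<in> {a..b}" "\<forall>y\<in>{a..b}. D y \<le> D c"
    using continuous_attains_sup[OF compact_Icc _ cont] ab by auto
  have "D s \<le> D c" using c(2) s by blast
  then have "c \<noteq> a" "c \<noteq> b" using gt by auto
  then have c_inner: "c \<in> {a<..<b}" using c(1) by auto
  have "D' c = 0"
  proof (rule DERIV_local_max[OF deriv[OF c(1)]])
    show "0 < min (c - a) (b - c)" using c_inner by auto
    show "\<forall>y. \<bar>c - y\<bar> < min (c - a) (b - c) \<longrightarrow> D y \<le> D c"
    proof (intro allI impI)
      fix y assume "\<bar>c - y\<bar> < min (c - a) (b - c)"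
      then have "y \<in> {a..b}" by auto
      then show "D y \<le> D c" using c(2) by blast
    qed
  qed
  with nonzero[OF c_inner] show False by simp
qed

lemma abs_le_endpoints_if_deriv_nonzero:
  fixes D D' :: "real \<Rightarrow> real"
  assumes ab: "a \<le> b"
    and deriv: "\<And>s. s \<in> {a..b} \<Longrightarrow> (D has_real_derivative D' s) (at s)"
    and nonzero: "\<And>s. s \<in> {a<..<b} \<Longrightarrow> D' s \<noteq> 0"
    and s: "s \<in> {a..b}"
  shows "\<bar>D s\<bar> \<le> \<bar>D a\<bar> + \<bar>D b\<bar>"
proof -
  have "D s \<le> max (D a) (D b)"
    by (rule le_max_endpoints_if_deriv_nonzero[OF assms])
  moreover have "- D s \<le> max (- D a) (- D b)"
    by (rule le_max_endpoints_if_deriv_nonzero[OF ab _ _ s, where D'="\<lambda>s. - D' s"])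
       (use deriv nonzero in \<open>auto intro: DERIV_minus\<close>)
  ultimately show ?thesis by linarith
qed

section \<open>Densities with respect to Lebesgue measure\<close>

lemma density_nonneg_AE:
  fixes Zs :: "'a::euclidean_space set" and Q :: "'a measure" and g :: "'a \<Rightarrow> real"
  assumes Zs: "Zs \<in> sets borel"
    and dens: "\<forall>B\<in>sets borel. B \<subseteq> Zs \<longrightarrow> set_integrable lborel B g \<and> measure Q B = (LINT x:B|lborel. g x)"
  shows "AE x in lborel. x \<in> Zs \<longrightarrow> 0 \<le> g x"
proof -
  define B where "B = {x\<in>Zs. g x < 0}"
  have "(\<lambda>x. indicator Zs x *\<^sub>R g x) \<in> borel_measurable borel"
    using dens Zs unfolding set_integrable_def by (auto dest: borel_measurable_integrable)
  then have "{x. indicator Zs x *\<^sub>R g x < (0::real)} \<in> sets borel" by measurable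
  moreover have "{x. indicator Zs x *\<^sub>R g x < (0::real)} = B" by (auto simp: B_def indicator_def)
  ultimately have B: "B \<in> sets borel" "B \<subseteq> Zs" by (auto simp: B_def)
  then have int: "integrable lborel (\<lambda>x. - (indicator B x *\<^sub>R g x))"
    using dens unfolding set_integrable_def by auto
  have nonneg: "AE x in lborel. 0 \<le> - (indicator B x *\<^sub>R g x)"
    by (rule AE_I2) (auto simp: indicator_def B_def)
  have "integral\<^sup>L lborel (\<lambda>x. - (indicator B x *\<^sub>R g x)) = - measure Q B"
    using dens B unfolding set_lebesgue_integral_def by simp
  then have "integral\<^sup>L lborel (\<lambda>x. - (indicator B x *\<^sub>R g x)) = 0"
    using measure_nonneg[of Q B] integral_nonneg_AE[OF nonneg] by linarith
  then have "AE x in lborel. - (indicator B x *\<^sub>R g x) = 0"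
    using integral_nonneg_eq_0_iff_AE[OF int nonneg] by simp
  then show ?thesis
    by eventually_elim (auto simp: B_def indicator_def split: if_splits)
qed

lemma borel_measurable_density:
  fixes Zs :: "'a::euclidean_space set" and g :: "'a \<Rightarrow> real"
  assumes "Zs \<in> sets borel" "set_integrable lborel Zs g"
  shows "g \<in> borel_measurable (restrict_space lborel Zs)"
  using assms borel_measurable_restrict_space_iff[of Zs lborel g]
  unfolding set_integrable_def by (auto dest: borel_measurable_integrable)

lemma density_representation:
  fixes Zs :: "'a::euclidean_space set" and Q :: "'a measure" and g :: "'a \<Rightarrow> real"
  assumes Zs: "Zs \<in> sets borel" and sets_Q: "sets Q = sets (restrict_space borel Zs)"
    and Q: "finite_measure Q"
    and dens: "\<forall>B\<in>sets borel. B \<subseteq> Zs \<longrightarrow> set_integrable lborel B g \<and> measure Q B = (LINT x:B|lborel. g x)"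
  shows "Q = density (restrict_space lborel Zs) (\<lambda>x. ennreal (g x))"
proof (rule measure_eqI)
  show "sets Q = sets (density (restrict_space lborel Zs) (\<lambda>x. ennreal (g x)))"
    using sets_Q by (simp add: sets_restrict_space)
  fix A assume "A \<in> sets Q"
  then have A: "A \<in> sets borel" "A \<subseteq> Zs"
    using sets_Q sets_restrict_space_iff[of Zs borel A] Zs by auto
  have Zs': "Zs \<inter> space lborel \<in> sets lborel" using Zs by simp
  have "emeasure Q A = ennreal (LINT x:A|lborel. g x)"
    using dens A Q by (simp add: finite_measure.emeasure_eq_measure)
  also have "\<dots> = (\<integral>\<^sup>+ x. ennreal (indicator A x *\<^sub>R g x) \<partial>lborel)"
    using dens A density_nonneg_AE[OF Zs dens] unfolding set_lebesgue_integral_def set_integrable_def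
    by (subst nn_integral_eq_integral) (auto elim!: eventually_mono simp: indicator_def)
  also have "\<dots> = (\<integral>\<^sup>+ x. ennreal (g x) * indicator A x * indicator Zs x \<partial>lborel)"
    by (rule nn_integral_cong) (use A in \<open>auto simp: indicator_def\<close>)
  also have "\<dots> = emeasure (density (restrict_space lborel Zs) (\<lambda>x. ennreal (g x))) A"
    using A Zs dens borel_measurable_density[OF Zs]
    by (subst emeasure_density) (auto simp: nn_integral_restrict_space[OF Zs'] sets_restrict_space_iff)
  finally show "emeasure Q A = emeasure (density (restrict_space lborel Zs) (\<lambda>x. ennreal (g x))) A" .
qed

lemma integral_density_representation:
  fixes Zs :: "'a::euclidean_space set" and Q :: "'a measure" and g h :: "'a \<Rightarrow> real"
  assumes Zs: "Zs \<in> sets borel" and sets_Q: "sets Q = sets (restrict_space borel Zs)"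
    and Q: "finite_measure Q"
    and dens: "\<forall>B\<in>sets borel. B \<subseteq> Zs \<longrightarrow> set_integrable lborel B g \<and> measure Q B = (LINT x:B|lborel. g x)"
    and h_meas: "h \<in> borel_measurable (restrict_space borel Zs)"
    and h_int: "integrable Q h"
  shows "set_integrable lborel Zs (\<lambda>x. h x * g x)" "integral\<^sup>L Q h = (LINT x:Zs|lborel. h x * g x)"
proof -
  let ?N = "restrict_space lborel Zs"
  have Zs': "Zs \<inter> space lborel \<in> sets lborel" using Zs by simp
  have Q_eq: "Q = density ?N (\<lambda>x. ennreal (g x))"
    by (rule density_representation[OF Zs sets_Q Q dens])
  have g_meas: "g \<in> borel_measurable ?N"
    using dens Zs by (intro borel_measurable_density) auto
  have h_meas': "h \<in> borel_measurable ?N"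
    using h_meas by (simp add: sets_restrict_space cong: measurable_cong_sets)
  have g_nonneg: "AE x in ?N. 0 \<le> g x"
    using density_nonneg_AE[OF Zs dens] AE_restrict_space_iff[OF Zs'] by simp
  have "integrable ?N (\<lambda>x. g x *\<^sub>R h x)"
    using h_int integrable_density[OF h_meas' g_meas g_nonneg] Q_eq by simp
  then show "set_integrable lborel Zs (\<lambda>x. h x * g x)"
    unfolding set_integrable_def using integrable_restrict_space[OF Zs', of "\<lambda>x. g x * h x"]
    by (simp add: mult.commute)
  have "integral\<^sup>L Q h = integral\<^sup>L ?N (\<lambda>x. g x *\<^sub>R h x)"
    using integral_density[OF h_meas' g_meas g_nonneg] Q_eq by simp
  also have "\<dots> = (LINT x:Zs|lborel. h x * g x)"
    unfolding set_lebesgue_integral_def using integral_restrict_space[OF Zs', of "\<lambda>x. g x * h x"]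
    by (simp add: mult.commute)
  finally show "integral\<^sup>L Q h = (LINT x:Zs|lborel. h x * g x)" .
qed

lemma set_integrable_continuous_weight_sum:
  fixes a b :: "'a::euclidean_space \<Rightarrow> real" and D :: "'a \<Rightarrow> 'b::topological_space \<Rightarrow> real"
  assumes a_meas: "(\<lambda>x. indicator Zs x * a x) \<in> borel_measurable lborel"
    and D_meas: "\<And>z. z \<in> U \<Longrightarrow> (\<lambda>x. indicator Zs x * D x z) \<in> borel_measurable lborel"
    and b_nonneg: "\<And>x. 0 \<le> b x" and K: "0 \<le> K"
    and a_int: "\<And>z. z \<in> U \<Longrightarrow> set_integrable lborel Zs (\<lambda>x. a x * D x z)"
    and b_int: "\<And>z. z \<in> U \<Longrightarrow> set_integrable lborel Zs (\<lambda>x. b x * D x z)"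
    and a_cont: "continuous_on U (\<lambda>z. LINT x:Zs|lborel. \<bar>a x * D x z\<bar>)"
    and b_cont: "continuous_on U (\<lambda>z. LINT x:Zs|lborel. \<bar>b x * D x z\<bar>)"
  shows "\<And>z. z \<in> U \<Longrightarrow> set_integrable lborel Zs (\<lambda>x. (\<bar>a x\<bar> + K * b x) * D x z)"
    and "continuous_on U (\<lambda>z. LINT x:Zs|lborel. \<bar>(\<bar>a x\<bar> + K * b x) * D x z\<bar>)"
proof -
  fix z assume z: "z \<in> U"
  have "set_integrable lborel Zs (\<lambda>x. \<bar>a x\<bar> * D x z)"
    unfolding set_integrable_def
  proof (rule Bochner_Integration.integrable_bound[OF a_int[OF z, unfolded set_integrable_def]])
    have "(\<lambda>x. indicator Zs x *\<^sub>R (\<bar>a x\<bar> * D x z)) = (\<lambda>x. \<bar>indicator Zs x * a x\<bar> * (indicator Zs x * D x z))"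
      by (auto simp: indicator_def)
    then show "(\<lambda>x. indicator Zs x *\<^sub>R (\<bar>a x\<bar> * D x z)) \<in> borel_measurable lborel"
      using a_meas D_meas[OF z] by simp
  qed (simp add: abs_mult)
  then show "set_integrable lborel Zs (\<lambda>x. (\<bar>a x\<bar> + K * b x) * D x z)"
    using b_int[OF z] by (simp add: distrib_right mult.assoc)
next
  have eq: "(LINT x:Zs|lborel. \<bar>(\<bar>a x\<bar> + K * b x) * D x z\<bar>)
      = (LINT x:Zs|lborel. \<bar>a x * D x z\<bar>) + K * (LINT x:Zs|lborel. \<bar>b x * D x z\<bar>)"
    if z: "z \<in> U" for z
  proof -
    have "\<bar>(\<bar>a x\<bar> + K * b x) * D x z\<bar> = \<bar>a x * D x z\<bar> + K * \<bar>b x * D x z\<bar>" for x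
    proof -
      have "0 \<le> \<bar>a x\<bar> + K * b x" using b_nonneg[of x] K by simp
      then have "\<bar>(\<bar>a x\<bar> + K * b x) * D x z\<bar> = (\<bar>a x\<bar> + K * b x) * \<bar>D x z\<bar>"
        by (simp add: abs_mult)
      then show ?thesis using b_nonneg[of x] by (simp add: abs_mult algebra_simps)
    qed
    then show ?thesis
      using set_integrable_abs[OF a_int[OF z]] set_integrable_abs[OF b_int[OF z]] K
      by (simp add: set_integral_add(2))
  qed
  have "continuous_on U (\<lambda>z. (LINT x:Zs|lborel. \<bar>a x * D x z\<bar>) + K * (LINT x:Zs|lborel. \<bar>b x * D x z\<bar>))"
    by (intro continuous_intros a_cont b_cont)
  then show "continuous_on U (\<lambda>z. LINT x:Zs|lborel. \<bar>(\<bar>a x\<bar> + K * b x) * D x z\<bar>)"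
    by (rule continuous_on_cong[THEN iffD1, rotated 2]) (auto simp: eq)
qed

section \<open>Differentiation under the integral sign\<close>

locale partial_smooth_density =
  fixes Zs :: "(real ^ 'm) set" and f :: "real ^ 'm \<Rightarrow> real ^ 'm \<Rightarrow> real" and i :: 'm
  assumes Zs_borel: "Zs \<in> sets borel"
    and twice_differentiable: "\<And>z z'. z \<in> interior Zs \<Longrightarrow> z' \<in> Zs \<Longrightarrow> Dp2_ex i (\<lambda>x. f z' x) z"
    and continuous_partial: "continuous_on (interior Zs \<times> Zs) (\<lambda>(z, z'). Dp i (\<lambda>x. f z' x) z)"
    and inflections_away: "\<And>z0. z0 \<in> interior Zs \<Longrightarrow> \<exists>\<delta>>0. \<exists>A. compact A \<and> A \<subseteq> Zs \<and>
           (\<forall>z'\<in>Zs - A. \<forall>t. upd z0 i t \<in> interior Zs \<and> Dp i (Dp i (\<lambda>x. f z' x)) (upd z0 i t) = 0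
               \<longrightarrow> \<bar>t - z0 $ i\<bar> \<ge> \<delta>)"
begin

lemma has_real_derivative_density:
  assumes "upd z0 i s \<in> interior Zs" "z' \<in> Zs"
  shows "((\<lambda>t. f z' (upd z0 i t)) has_real_derivative Dp i (\<lambda>x. f z' x) (upd z0 i s)) (at s)"
proof -
  have "Dp_ex i (\<lambda>x. f z' x) (upd z0 i s)"
    using twice_differentiable[OF assms] unfolding Dp2_ex_def using eventually_nhds_x_imp_x by fastforce
  then have "(\<lambda>t. f z' (upd (upd z0 i s) i t)) differentiable (at s)"
    unfolding Dp_ex_def by simp
  then show ?thesis unfolding Dp_def using DERIV_deriv_iff_real_differentiable by simp
qed

lemma has_real_derivative_partial_density:
  assumes "upd z0 i s \<in> interior Zs" "z' \<in> Zs"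
  shows "((\<lambda>t. Dp i (\<lambda>x. f z' x) (upd z0 i t)) has_real_derivative
           Dp i (Dp i (\<lambda>x. f z' x)) (upd z0 i s)) (at s)"
proof -
  have "(\<lambda>t. Dp i (\<lambda>x. f z' x) (upd (upd z0 i s) i t)) differentiable (at s)"
    using twice_differentiable[OF assms] unfolding Dp2_ex_def Dp_ex_def by simp
  then show ?thesis
    unfolding Dp_def[of i "Dp i (\<lambda>x. f z' x)"] using DERIV_deriv_iff_real_differentiable by simp
qed

lemma continuous_on_partial_density:
  assumes "z \<in> interior Zs"
  shows "continuous_on Zs (\<lambda>z'. Dp i (\<lambda>x. f z' x) z)"
  using continuous_on_compose2[OF continuous_partial continuous_on_Pair[OF continuous_on_const continuous_on_id]]
    assms by auto

lemma borel_measurable_partial_density: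
  assumes "z \<in> interior Zs"
  shows "(\<lambda>z'. indicator Zs z' * Dp i (\<lambda>x. f z' x) z) \<in> borel_measurable lborel"
  using borel_measurable_continuous_on_indicator[OF Zs_borel continuous_on_partial_density[OF assms]]
  by simp

lemma tendsto_partial_density:
  assumes "z' \<in> Zs" "\<And>k. u k \<in> interior Zs" "a \<in> interior Zs" "u \<longlonglongrightarrow> a"
  shows "(\<lambda>k. Dp i (\<lambda>x. f z' x) (u k)) \<longlonglongrightarrow> Dp i (\<lambda>x. f z' x) a"
proof -
  have "(\<lambda>k. (u k, z')) \<longlonglongrightarrow> (a, z')" by (intro tendsto_Pair assms tendsto_const)
  then show ?thesis
    using continuous_partial[unfolded continuous_on_sequentially, rule_format, of "(a, z')" "\<lambda>k. (u k, z')"]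
      assms by (auto simp: comp_def)
qed

lemma partial_density_bounded_on_compact:
  assumes "compact C" "C \<subseteq> interior Zs" "compact A" "A \<subseteq> Zs"
  obtains K where "0 \<le> K" "\<And>z z'. z \<in> C \<Longrightarrow> z' \<in> A \<Longrightarrow> \<bar>Dp i (\<lambda>x. f z' x) z\<bar> \<le> K"
proof -
  have "compact ((\<lambda>(z, z'). Dp i (\<lambda>x. f z' x) z) ` (C \<times> A))"
    using assms by (intro compact_continuous_image continuous_on_subset[OF continuous_partial] compact_Times) auto
  then obtain K where "\<And>z z'. z \<in> C \<Longrightarrow> z' \<in> A \<Longrightarrow> \<bar>Dp i (\<lambda>x. f z' x) z\<bar> \<le> K"
    by (force dest: compact_imp_bounded simp: bounded_iff)
  then show ?thesis by (intro that[of "max K 0"]) (auto intro: le_max_iff_disj[THEN iffD2])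
qed

lemma partial_density_segment_bound:
  assumes z0: "z0 \<in> interior Zs"
  obtains \<delta> A K where "\<delta> > 0" "compact A" "A \<subseteq> Zs" "0 \<le> K"
    "\<And>s. s \<in> {z0$i - \<delta> .. z0$i + \<delta>} \<Longrightarrow> upd z0 i s \<in> interior Zs"
    "\<And>z' s. z' \<in> Zs \<Longrightarrow> s \<in> {z0$i - \<delta> .. z0$i + \<delta>} \<Longrightarrow>
        \<bar>Dp i (\<lambda>x. f z' x) (upd z0 i s)\<bar> \<le> \<bar>Dp i (\<lambda>x. f z' x) (upd z0 i (z0$i - \<delta>))\<bar>
          + \<bar>Dp i (\<lambda>x. f z' x) (upd z0 i (z0$i + \<delta>))\<bar> + K * indicator A z'"
proof -
  obtain e where e: "e > 0" "ball z0 e \<subseteq> interior Zs"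
    using z0 open_interior open_contains_ball by blast
  obtain d A where dA: "d > 0" "compact A" "A \<subseteq> Zs"
    "\<forall>z'\<in>Zs - A. \<forall>t. upd z0 i t \<in> interior Zs \<and> Dp i (Dp i (\<lambda>x. f z' x)) (upd z0 i t) = 0
       \<longrightarrow> \<bar>t - z0 $ i\<bar> \<ge> d"
    using inflections_away[OF z0] by blast
  define \<delta> where "\<delta> = min (e/2) (d/2)"
  have \<delta>: "\<delta> > 0" using e dA by (simp add: \<delta>_def)
  let ?I = "{z0$i - \<delta> .. z0$i + \<delta>}"
  have seg: "upd z0 i s \<in> interior Zs" if "s \<in> ?I" for s
  proof -
    have "\<bar>s - z0 $ i\<bar> \<le> \<delta>" using that by (simp add: abs_le_iff)
    moreover have "\<delta> < e" using e by (simp add: \<delta>_def)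
    ultimately have "dist (upd z0 i s) z0 < e" by (simp add: dist_upd)
    then show ?thesis using e by (auto simp: dist_commute)
  qed
  have "compact ((\<lambda>s. upd z0 i s) ` ?I)"
    by (rule compact_continuous_image[OF continuous_on_upd compact_Icc])
  moreover have "(\<lambda>s. upd z0 i s) ` ?I \<subseteq> interior Zs" using seg by blast
  ultimately obtain K where K: "0 \<le> K"
    "\<And>z z'. z \<in> (\<lambda>s. upd z0 i s) ` ?I \<Longrightarrow> z' \<in> A \<Longrightarrow> \<bar>Dp i (\<lambda>x. f z' x) z\<bar> \<le> K"
    using partial_density_bounded_on_compact[OF _ _ dA(2,3)] by blast
  show ?thesis
  proof (rule that[OF \<delta> dA(2,3) K(1) seg])
    fix z' s assume z': "z' \<in> Zs" and s: "s \<in> ?I"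
    show "\<bar>Dp i (\<lambda>x. f z' x) (upd z0 i s)\<bar> \<le> \<bar>Dp i (\<lambda>x. f z' x) (upd z0 i (z0$i - \<delta>))\<bar>
          + \<bar>Dp i (\<lambda>x. f z' x) (upd z0 i (z0$i + \<delta>))\<bar> + K * indicator A z'"
    proof (cases "z' \<in> A")
      case True
      then show ?thesis using K(2)[OF imageI[OF s] True] by simp
    next
      case False
      \<comment> \<open>no zero of the second derivative on the segment, so the first derivative is monotone\<close>
      have "\<bar>Dp i (\<lambda>x. f z' x) (upd z0 i s)\<bar> \<le> \<bar>Dp i (\<lambda>x. f z' x) (upd z0 i (z0$i - \<delta>))\<bar>
          + \<bar>Dp i (\<lambda>x. f z' x) (upd z0 i (z0$i + \<delta>))\<bar>"
      proof (rule abs_le_endpoints_if_deriv_nonzero[OF _ has_real_derivative_partial_density[OF seg z'] _ s])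
        show "z0$i - \<delta> \<le> z0$i + \<delta>" using \<delta> by simp
        fix t assume t: "t \<in> {z0$i - \<delta> <..< z0$i + \<delta>}"
        then have "\<bar>t - z0 $ i\<bar> < d" using \<delta> by (auto simp: \<delta>_def abs_less_iff)
        then show "Dp i (Dp i (\<lambda>x. f z' x)) (upd z0 i t) \<noteq> 0"
          using dA(4) z' False seg[of t] t by force
      qed
      then show ?thesis using False by simp
    qed
  qed
qed

lemma abs_density_increment_le:
  assumes seg: "\<And>s. s \<in> {a..b} \<Longrightarrow> upd z0 i s \<in> interior Zs" and z': "z' \<in> Zs"
    and bound: "\<And>s. s \<in> {a..b} \<Longrightarrow> \<bar>Dp i (\<lambda>x. f z' x) (upd z0 i s)\<bar> \<le> B"
    and s: "s \<in> {a..b}" and t: "t \<in> {a..b}"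
  shows "\<bar>f z' (upd z0 i s) - f z' (upd z0 i t)\<bar> \<le> B * \<bar>s - t\<bar>"
  using field_differentiable_bound[OF convex_real_interval(5),
      where f="\<lambda>t. f z' (upd z0 i t)" and f'="\<lambda>s. Dp i (\<lambda>x. f z' x) (upd z0 i s)" and B=B,
      OF has_field_derivative_at_within[OF has_real_derivative_density[OF seg z']] _ s t]
    bound by auto

end

locale dominated_kernel_integral = partial_smooth_density +
  fixes V H :: "real ^ 'm \<Rightarrow> real"
  assumes V_meas: "(\<lambda>x. indicator Zs x * V x) \<in> borel_measurable lborel"
    and V_le_H: "\<And>x. x \<in> Zs \<Longrightarrow> \<bar>V x\<bar> \<le> H x"
    and H_cont: "continuous_on Zs H"
    and H_integrable: "\<And>z. z \<in> interior Zs \<Longrightarrow> set_integrable lborel Zs (\<lambda>z'. H z' * Dp i (\<lambda>x. f z' x) z)"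
    and H_continuous: "continuous_on (interior Zs) (\<lambda>z. LINT z':Zs|lborel. \<bar>H z' * Dp i (\<lambda>x. f z' x) z\<bar>)"
    and V_integrable: "\<And>z. z \<in> interior Zs \<Longrightarrow> set_integrable lborel Zs (\<lambda>z'. V z' * f z' z)"
begin

lemma H_nonneg: "x \<in> Zs \<Longrightarrow> 0 \<le> H x"
  using V_le_H[of x] by linarith

lemma borel_measurable_V_partial_density:
  assumes "z \<in> interior Zs"
  shows "(\<lambda>z'. indicator Zs z' *\<^sub>R (V z' * Dp i (\<lambda>x. f z' x) z)) \<in> borel_measurable lborel"
proof -
  have "(\<lambda>z'. indicator Zs z' *\<^sub>R (V z' * Dp i (\<lambda>x. f z' x) z)) =
        (\<lambda>z'. (indicator Zs z' * V z') * (indicator Zs z' * Dp i (\<lambda>x. f z' x) z))"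
    by (auto simp: indicator_def fun_eq_iff)
  then show ?thesis using V_meas borel_measurable_partial_density[OF assms] by simp
qed

lemma integrable_abs_H_partial_density:
  assumes "z \<in> interior Zs"
  shows "integrable lborel (\<lambda>z'. indicator Zs z' *\<^sub>R \<bar>H z' * Dp i (\<lambda>x. f z' x) z\<bar>)"
proof -
  have "integrable lborel (\<lambda>z'. \<bar>indicator Zs z' *\<^sub>R (H z' * Dp i (\<lambda>x. f z' x) z)\<bar>)"
    using H_integrable[OF assms] unfolding set_integrable_def by (rule integrable_abs)
  then show ?thesis by (simp add: indicator_def abs_mult)
qed

lemma continuous_on_LINT_partial:
  "continuous_on (interior Zs) (\<lambda>z. LINT z':Zs|lborel. V z' * Dp i (\<lambda>x. f z' x) z)"
proof (rule continuous_on_sequentiallyI)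
  fix u a assume u: "\<forall>n. u n \<in> interior Zs" and a: "a \<in> interior Zs" and ua: "u \<longlonglongrightarrow> a"
  have lim: "(\<lambda>k. Dp i (\<lambda>x. f z' x) (u k)) \<longlonglongrightarrow> Dp i (\<lambda>x. f z' x) a" if "z' \<in> Zs" for z'
    by (rule tendsto_partial_density[OF that _ a ua]) (use u in blast)
  have "(\<lambda>k. LINT z':Zs|lborel. \<bar>H z' * Dp i (\<lambda>x. f z' x) (u k)\<bar>)
      \<longlonglongrightarrow> (LINT z':Zs|lborel. \<bar>H z' * Dp i (\<lambda>x. f z' x) a\<bar>)"
    using H_continuous[unfolded continuous_on_sequentially] u a ua by (auto simp: comp_def)
  then show "(\<lambda>n. LINT z':Zs|lborel. V z' * Dp i (\<lambda>x. f z' x) (u n))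
      \<longlonglongrightarrow> (LINT z':Zs|lborel. V z' * Dp i (\<lambda>x. f z' x) a)"
    unfolding set_lebesgue_integral_def
  proof (rule tendsto_integral_Pratt[rotated 7])
    fix k z'
    show "\<bar>indicator Zs z' *\<^sub>R (V z' * Dp i (\<lambda>x. f z' x) (u k))\<bar>
        \<le> indicator Zs z' *\<^sub>R \<bar>H z' * Dp i (\<lambda>x. f z' x) (u k)\<bar>"
      using V_le_H[of z'] H_nonneg[of z'] by (auto simp: abs_mult indicator_def intro: mult_right_mono)
    show "(\<lambda>k. indicator Zs z' *\<^sub>R (V z' * Dp i (\<lambda>x. f z' x) (u k)))
        \<longlonglongrightarrow> indicator Zs z' *\<^sub>R (V z' * Dp i (\<lambda>x. f z' x) a)"
      by (cases "z' \<in> Zs") (auto intro!: tendsto_intros lim)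
    show "(\<lambda>k. indicator Zs z' *\<^sub>R \<bar>H z' * Dp i (\<lambda>x. f z' x) (u k)\<bar>)
        \<longlonglongrightarrow> indicator Zs z' *\<^sub>R \<bar>H z' * Dp i (\<lambda>x. f z' x) a\<bar>"
      by (cases "z' \<in> Zs") (auto intro!: tendsto_intros lim)
  qed (use borel_measurable_V_partial_density integrable_abs_H_partial_density u a in auto)
qed

lemma integrable_segment_dominator:
  assumes "a \<in> interior Zs" "b \<in> interior Zs" "compact A" "A \<subseteq> Zs"
  shows "integrable lborel (\<lambda>z'. indicator Zs z' * (H z' *
      (\<bar>Dp i (\<lambda>x. f z' x) a\<bar> + \<bar>Dp i (\<lambda>x. f z' x) b\<bar> + K * indicator A z')))"
proof -
  have "integrable lborel (\<lambda>z'. indicator Zs z' *\<^sub>R \<bar>H z' * Dp i (\<lambda>x. f z' x) a\<bar>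
      + indicator Zs z' *\<^sub>R \<bar>H z' * Dp i (\<lambda>x. f z' x) b\<bar> + K * (indicator A z' *\<^sub>R H z'))"
    using integrable_abs_H_partial_density assms
      borel_integrable_compact[OF assms(3) continuous_on_subset[OF H_cont assms(4)]]
    by auto
  moreover have "indicator Zs z' *\<^sub>R \<bar>H z' * Dp i (\<lambda>x. f z' x) a\<bar>
      + indicator Zs z' *\<^sub>R \<bar>H z' * Dp i (\<lambda>x. f z' x) b\<bar> + K * (indicator A z' *\<^sub>R H z')
      = indicator Zs z' * (H z' * (\<bar>Dp i (\<lambda>x. f z' x) a\<bar> + \<bar>Dp i (\<lambda>x. f z' x) b\<bar> + K * indicator A z'))"
    for z'
    using assms(4) H_nonneg by (auto simp: indicator_def abs_mult algebra_simps)
  ultimately show ?thesis by simp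
qed

lemma difference_quotient_dominator:
  assumes z0: "z0 \<in> interior Zs"
  obtains \<delta> w where "\<delta> > 0" "\<And>s. s \<in> {z0$i - \<delta> .. z0$i + \<delta>} \<Longrightarrow> upd z0 i s \<in> interior Zs"
    "integrable lborel w"
    "\<And>z' s. s \<in> {z0$i - \<delta> .. z0$i + \<delta>} \<Longrightarrow> s \<noteq> z0$i \<Longrightarrow>
       \<bar>(indicator Zs z' *\<^sub>R (V z' * f z' (upd z0 i s)) - indicator Zs z' *\<^sub>R (V z' * f z' z0))
          / (s - z0$i)\<bar> \<le> w z'"
proof -
  obtain \<delta> A K where \<delta>: "\<delta> > 0" and A: "compact A" "A \<subseteq> Zs" and K: "0 \<le> K"
    and seg: "\<And>s. s \<in> {z0$i - \<delta> .. z0$i + \<delta>} \<Longrightarrow> upd z0 i s \<in> interior Zs"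
    and bound: "\<And>z' s. z' \<in> Zs \<Longrightarrow> s \<in> {z0$i - \<delta> .. z0$i + \<delta>} \<Longrightarrow>
        \<bar>Dp i (\<lambda>x. f z' x) (upd z0 i s)\<bar> \<le> \<bar>Dp i (\<lambda>x. f z' x) (upd z0 i (z0$i - \<delta>))\<bar>
          + \<bar>Dp i (\<lambda>x. f z' x) (upd z0 i (z0$i + \<delta>))\<bar> + K * indicator A z'"
    using partial_density_segment_bound[OF z0] by blast
  define B where "B z' = \<bar>Dp i (\<lambda>x. f z' x) (upd z0 i (z0$i - \<delta>))\<bar>
      + \<bar>Dp i (\<lambda>x. f z' x) (upd z0 i (z0$i + \<delta>))\<bar> + K * indicator A z'" for z'
  have w: "integrable lborel (\<lambda>z'. indicator Zs z' * (H z' * B z'))"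
    unfolding B_def using \<delta> by (intro integrable_segment_dominator seg A) auto
  show ?thesis
  proof (rule that[OF \<delta> seg w])
    fix z' s assume s: "s \<in> {z0$i - \<delta> .. z0$i + \<delta>}" and s_ne: "s \<noteq> z0$i"
    show "\<bar>(indicator Zs z' *\<^sub>R (V z' * f z' (upd z0 i s)) - indicator Zs z' *\<^sub>R (V z' * f z' z0))
          / (s - z0$i)\<bar> \<le> indicator Zs z' * (H z' * B z')"
    proof (cases "z' \<in> Zs")
      case True
      have "\<bar>f z' (upd z0 i s) - f z' (upd z0 i (z0$i))\<bar> \<le> B z' * \<bar>s - z0$i\<bar>"
        by (rule abs_density_increment_le[OF seg True _ s]) (use bound[OF True] \<delta> in \<open>auto simp: B_def\<close>)
      then have "\<bar>(f z' (upd z0 i s) - f z' z0) / (s - z0$i)\<bar> \<le> B z'"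
        using s_ne by (simp add: abs_div divide_le_eq)
      moreover have "0 \<le> B z'" using K by (simp add: B_def)
      ultimately have "\<bar>V z'\<bar> * \<bar>(f z' (upd z0 i s) - f z' z0) / (s - z0$i)\<bar> \<le> H z' * B z'"
        using V_le_H[OF True] by (intro mult_mono) auto
      then show ?thesis using True by (simp add: abs_mult right_diff_distrib[symmetric])
    qed simp
  qed
qed

lemma has_real_derivative_LINT:
  assumes z0: "z0 \<in> interior Zs"
  shows "((\<lambda>t. LINT z':Zs|lborel. V z' * f z' (upd z0 i t)) has_real_derivative
            (LINT z':Zs|lborel. V z' * Dp i (\<lambda>x. f z' x) z0)) (at (z0 $ i))"
  unfolding set_lebesgue_integral_def
proof -
  obtain \<delta> w where \<delta>: "\<delta> > 0" and seg: "\<And>s. s \<in> {z0$i - \<delta> .. z0$i + \<delta>} \<Longrightarrow> upd z0 i s \<in> interior Zs"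
    and w: "integrable lborel w"
    and dom: "\<And>z' s. s \<in> {z0$i - \<delta> .. z0$i + \<delta>} \<Longrightarrow> s \<noteq> z0$i \<Longrightarrow>
       \<bar>(indicator Zs z' *\<^sub>R (V z' * f z' (upd z0 i s)) - indicator Zs z' *\<^sub>R (V z' * f z' z0))
          / (s - z0$i)\<bar> \<le> w z'"
    using difference_quotient_dominator[OF z0] by blast
  show "((\<lambda>t. integral\<^sup>L lborel (\<lambda>z'. indicator Zs z' *\<^sub>R (V z' * f z' (upd z0 i t)))) has_real_derivative
      integral\<^sup>L lborel (\<lambda>z'. indicator Zs z' *\<^sub>R (V z' * Dp i (\<lambda>x. f z' x) z0))) (at (z0 $ i))"
  proof (rule has_real_derivative_integral_dominated[OF \<delta> _ borel_measurable_V_partial_density[OF z0] _ w])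
    fix s assume "s \<in> {z0$i - \<delta> <..< z0$i + \<delta>}"
    then have s: "s \<in> {z0$i - \<delta> .. z0$i + \<delta>}" by simp
    show "integrable lborel (\<lambda>z'. indicator Zs z' *\<^sub>R (V z' * f z' (upd z0 i s)))"
      using V_integrable[OF seg[OF s]] unfolding set_integrable_def .
    fix z' assume "s \<noteq> z0$i"
    then show "\<bar>(indicator Zs z' *\<^sub>R (V z' * f z' (upd z0 i s))
        - indicator Zs z' *\<^sub>R (V z' * f z' (upd z0 i (z0$i)))) / (s - z0$i)\<bar> \<le> w z'"
      using dom[OF s] by simp
  next
    fix z'
    show "((\<lambda>t. indicator Zs z' *\<^sub>R (V z' * f z' (upd z0 i t))) has_real_derivative
        indicator Zs z' *\<^sub>R (V z' * Dp i (\<lambda>x. f z' x) z0)) (at (z0$i))"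
    proof (cases "z' \<in> Zs")
      case True
      then show ?thesis
        using DERIV_cmult[OF has_real_derivative_density[OF seg True], of "z0$i" "V z'"] \<delta> by simp
    qed simp
  qed
qed

end

context partial_smooth_density
begin

lemma kernel_integral_partial_derivative:
  fixes P :: "real ^ 'm \<Rightarrow> (real ^ 'm) measure" and V H :: "real ^ 'm \<Rightarrow> real"
  assumes kernel: "P \<in> restrict_space borel Zs \<rightarrow>\<^sub>M prob_algebra (restrict_space borel Zs)"
    and dens: "\<forall>z\<in>Zs. \<forall>B\<in>sets borel. B \<subseteq> Zs \<longrightarrow>
           set_integrable lborel B (\<lambda>z'. f z' z) \<and> measure (P z) B = (LINT z':B|lborel. f z' z)"
    and V_finite: "\<And>w. w \<in> Zs \<Longrightarrow> (\<integral>\<^sup>+x. ennreal \<bar>V x\<bar> \<partial>P w) < \<infinity>"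
    and V_le_H: "\<And>x. x \<in> Zs \<Longrightarrow> \<bar>V x\<bar> \<le> H x"
    and H_cont: "continuous_on Zs H"
    and H_integrable: "\<And>z. z \<in> interior Zs \<Longrightarrow> set_integrable lborel Zs (\<lambda>z'. H z' * Dp i (\<lambda>x. f z' x) z)"
    and H_continuous: "continuous_on (interior Zs) (\<lambda>z. LINT z':Zs|lborel. \<bar>H z' * Dp i (\<lambda>x. f z' x) z\<bar>)"
  obtains G G' where "\<And>w. w \<in> interior Zs \<Longrightarrow> integral\<^sup>L (P w) V = G w"
    "\<And>z. z \<in> interior Zs \<Longrightarrow> ((\<lambda>t. G (upd z i t)) has_real_derivative G' z) (at (z $ i))"
    "continuous_on (interior Zs) G'"
proof -
  have P: "sets (P w) = sets (restrict_space borel Zs)" "prob_space (P w)" if "w \<in> Zs" for w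
    using measurable_space[OF kernel, of w] that by (auto simp: space_prob_algebra space_restrict_space)
  show ?thesis
  proof (cases "V \<in> borel_measurable (restrict_space borel Zs)")
    case False
    \<comment> \<open>then every integral of \<open>V\<close> takes the junk value \<open>0\<close>\<close>
    then have "integral\<^sup>L (P w) V = 0" if "w \<in> Zs" for w
      using P(1)[OF that] by (intro not_integrable_integral_eq) (auto cong: measurable_cong_sets)
    then show ?thesis by (intro that[of "\<lambda>_. 0" "\<lambda>_. 0"]) (auto dest: interior_subset[THEN subsetD])
  next
    case True
    have V_int: "integrable (P w) V" if "w \<in> Zs" for w
      using V_finite[OF that] True P(1)[OF that]
      by (intro integrableI_bounded) (auto cong: measurable_cong_sets)
    have density_integral: "set_integrable lborel Zs (\<lambda>x. V x * f x w)"
        "integral\<^sup>L (P w) V = (LINT x:Zs|lborel. V x * f x w)" if "w \<in> Zs" for w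
      using integral_density_representation[OF Zs_borel P(1)[OF that] _ _ True V_int[OF that]]
        P(2)[OF that] dens that by (auto simp: prob_space_def)
    interpret dominated_kernel_integral Zs f i V H
    proof unfold_locales
      show "(\<lambda>x. indicator Zs x * V x) \<in> borel_measurable lborel"
        using True borel_measurable_restrict_space_iff[of Zs borel V] Zs_borel by simp
      show "\<And>z. z \<in> interior Zs \<Longrightarrow> set_integrable lborel Zs (\<lambda>z'. V z' * f z' z)"
        using density_integral(1) interior_subset by blast
    qed (use V_le_H H_cont H_integrable H_continuous in auto)
    show ?thesis
      by (rule that[of "\<lambda>w. LINT x:Zs|lborel. V x * f x w" "\<lambda>z. LINT z':Zs|lborel. V z' * Dp i (\<lambda>x. f z' x) z"])
         (use density_integral interior_subset has_real_derivative_LINT continuous_on_LINT_partial in auto)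
  qed
qed

end
theorem proposition4:
  fixes Zs :: "(real ^ 'm) set"
    and P :: "real ^ 'm \<Rightarrow> (real ^ 'm) measure"
    and f :: "real ^ 'm \<Rightarrow> real ^ 'm \<Rightarrow> real"
    and M :: "real ^ 'm \<Rightarrow> 'w measure"
    and F :: "nat \<Rightarrow> 'w measure"
    and Z :: "nat \<Rightarrow> 'w \<Rightarrow> real ^ 'm"
    and \<beta> :: real and r c g :: "real ^ 'm \<Rightarrow> real"
    and n :: nat and mbar d m' d' :: real
  defines "S \<equiv> restrict_space borel Zs"
  defines "k2 \<equiv> (\<lambda>z. enn2real (ell P S n m' d' g r c z))"
  assumes Zs_borel: "Zs \<in> sets borel"
    and kernel: "P \<in> S \<rightarrow>\<^sub>M prob_algebra S"
    and Markov_prob: "\<forall>z\<in>Zs. prob_space (M z)"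
    and Markov_filt: "\<forall>z\<in>Zs. filtration (space (M z)) F \<and> (\<forall>t. subalgebra (M z) (F t))"
    and Markov_adapted: "\<forall>t. Z t \<in> F t \<rightarrow>\<^sub>M S"
    and Markov_init: "\<forall>z\<in>Zs. AE \<omega> in M z. Z 0 \<omega> = z"
    and Markov_trans: "\<forall>z\<in>Zs. \<forall>t. \<forall>B\<in>sets S. AE \<omega> in M z.
           real_cond_exp (M z) (F t) (\<lambda>\<omega>. indicator B (Z (Suc t) \<omega>)) \<omega> = measure (P (Z t \<omega>)) B"
    and beta: "0 < \<beta>" "\<beta> < 1"
    and r_meas: "r \<in> borel_measurable S" and c_meas: "c \<in> borel_measurable S"
    and A_g: "g \<in> borel_measurable S" "\<forall>z. 0 \<le> g z"
    and A_par: "0 \<le> mbar" "0 \<le> d" "\<beta> * mbar < 1"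
    and A_r: "\<forall>z\<in>Zs. (\<integral>\<^sup>+ z'. ennreal \<bar>r z'\<bar> \<partial>(kpow P S n z)) \<le> ennreal (g z)"
    and A_c: "\<forall>z\<in>Zs. (\<integral>\<^sup>+ z'. ennreal \<bar>c z'\<bar> \<partial>(kpow P S n z)) \<le> ennreal (g z)"
    and A_drift: "\<forall>z\<in>Zs. (\<integral>\<^sup>+ z'. ennreal (g z') \<partial>(P z)) \<le> ennreal (mbar * g z + d)"
    and mdpos: "0 < m'" "0 < d'"
    and mcond: "mbar + 2 * m' > 1" "\<beta> * (mbar + 2 * m') < 1" "d' \<ge> d / (mbar + 2 * m' - 1)"
    and ell_finite: "\<forall>z\<in>Zs. ell P S n m' d' g r c z < \<infinity>"
    and dens: "\<forall>z\<in>Zs. \<forall>B\<in>sets borel. B \<subseteq> Zs \<longrightarrow>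
           set_integrable lborel B (\<lambda>z'. f z' z) \<and> measure (P z) B = (LINT z':B|lborel. f z' z)"
    and a2: "\<forall>i. \<forall>z\<in>interior Zs. \<forall>z'\<in>Zs. Dp2_ex i (\<lambda>x. f z' x) z"
    and a_cont: "\<forall>i. continuous_on (interior Zs \<times> Zs) (\<lambda>(z, z'). Dp i (\<lambda>x. f z' x) z)"
    and b_fin: "\<forall>i. \<forall>z'\<in>Zs. \<forall>z.
           finite {t. upd z i t \<in> interior Zs \<and> Dp i (Dp i (\<lambda>x. f z' x)) (upd z i t) = 0}"
    and b_loc: "\<forall>i. \<forall>z0\<in>interior Zs. \<exists>\<delta>>0. \<exists>A. compact A \<and> A \<subseteq> Zs \<and>
           (\<forall>z'\<in>Zs - A. \<forall>t. upd z0 i t \<in> interior Zs \<and> Dp i (Dp i (\<lambda>x. f z' x)) (upd z0 i t) = 0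
               \<longrightarrow> \<bar>t - z0 $ i\<bar> \<ge> \<delta>)"
    and c_ex: "\<forall>i. \<forall>z\<in>interior Zs. Dp_ex i c z"
    and c_cont: "\<forall>i. continuous_on (interior Zs) (Dp i c)"
    and d_cont: "continuous_on Zs r" "continuous_on Zs k2"
    and d_int1: "\<forall>i. \<forall>z\<in>interior Zs. set_integrable lborel Zs (\<lambda>z'. r z' * Dp i (\<lambda>x. f z' x) z)"
    and d_cont1: "\<forall>i. continuous_on (interior Zs)
           (\<lambda>z. LINT z':Zs|lborel. \<bar>r z' * Dp i (\<lambda>x. f z' x) z\<bar>)"
    and d_int2: "\<forall>i. \<forall>z\<in>interior Zs. set_integrable lborel Zs (\<lambda>z'. k2 z' * Dp i (\<lambda>x. f z' x) z)"
    and d_cont2: "\<forall>i. continuous_on (interior Zs)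
           (\<lambda>z. LINT z':Zs|lborel. \<bar>k2 z' * Dp i (\<lambda>x. f z' x) z\<bar>)"
  shows "\<forall>i. (\<forall>z\<in>interior Zs. Dp_ex i (psistar P M F Z \<beta> r c) z)
             \<and> continuous_on (interior Zs) (Dp i (psistar P M F Z \<beta> r c))"
proof -
  have space_S: "space S = Zs" by (simp add: S_def space_restrict_space)
  interpret drift_stopping_problem S P M F Z \<beta> r c g n mbar d m' d'
    by (intro drift_stopping_problem.intro markov_process.intro drift_stopping_problem_axioms.intro)
      (use kernel Markov_prob Markov_filt Markov_adapted Markov_init Markov_trans beta r_meas c_meas
         A_g A_par A_r A_c A_drift mdpos mcond in \<open>simp_all add: space_S\<close>)
  define H where "H x = \<bar>r x\<bar> + weight_constant * k2 x" for x
  have V_le_H: "\<bar>vstar M F Z \<beta> r c x\<bar> \<le> H x" if "x \<in> Zs" for x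
    using abs_vstar_le_weight(3)[of x] ell_finite that by (simp add: space_S H_def k2_def)
  have V_finite: "(\<integral>\<^sup>+x. ennreal \<bar>vstar M F Z \<beta> r c x\<bar> \<partial>P w) < \<infinity>" if "w \<in> Zs" for w
    using nn_integral_abs_vstar_finite[of w] ell_finite that by (simp add: space_S)
  have H_cont: "continuous_on Zs H"
    unfolding H_def using d_cont by (intro continuous_intros)
  have r_meas': "(\<lambda>x. indicator Zs x * r x) \<in> borel_measurable lborel"
    using r_meas borel_measurable_restrict_space_iff[of Zs borel r] Zs_borel by (simp add: S_def)
  show ?thesis
  proof
    fix i
    interpret partial_smooth_density Zs f i
      by unfold_locales (use Zs_borel a2 a_cont b_loc in simp_all)
    note H_weight = set_integrable_continuous_weight_sum[where D="\<lambda>z' z. Dp i (\<lambda>x. f z' x) z",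
        OF r_meas' borel_measurable_partial_density _ weight_constant_nonneg]
    obtain G G' where G: "\<And>w. w \<in> interior Zs \<Longrightarrow> integral\<^sup>L (P w) (vstar M F Z \<beta> r c) = G w"
      "\<And>z. z \<in> interior Zs \<Longrightarrow> ((\<lambda>t. G (upd z i t)) has_real_derivative G' z) (at (z $ i))"
      "continuous_on (interior Zs) G'"
      by (rule kernel_integral_partial_derivative[OF kernel[unfolded S_def] dens V_finite V_le_H H_cont])
         (use H_weight d_int1 d_int2 d_cont1 d_cont2 in \<open>auto simp: H_def k2_def\<close>)
    show "(\<forall>z\<in>interior Zs. Dp_ex i (psistar P M F Z \<beta> r c) z)
        \<and> continuous_on (interior Zs) (Dp i (psistar P M F Z \<beta> r c))"
      by (rule continuous_Dp_add_cmult[OF open_interior _ G(2,3)]) (use G(1) c_ex c_cont in \<open>auto simp: psistar_def\<close>)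
  qed
qed

end
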